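(* Assume Case 3 holds. Then for every $n\ge1$ the order of $Q^n$ with respect to $z$, i.e. $\min\{i: \text{the coefficient of } z^iw^j \text{ in } Q^n \text{ is nonzero for some } j\}$, equals $\gamma_n$. Consequently $(\gamma_n,d^n)$ is the vertex of $N(Q^n)$ with minimal $x$-coordinate, and $N(Q^n)\subset\{(x,y):x\ge\gamma_n,\ x+l_2y\ge\gamma_n+l_2d^n\}$.
   Context: Let $f(z,w)=(p(z),q(z,w))$ be a holomorphic skew product germ at the origin of $\mathbb{C}^2$ with $f(0,0)=(0,0)$, where $p(z)=a_\delta z^\delta+O(z^{\delta+1})$ with $a_\delta\neq0$ and integer $\delta\ge1$, and $q(z,w)=\sum_{i+j\ge1}b_{ij}z^iw^j$ is not identically zero. For $n\ge1$ write $f^n=(p^n,Q^n)$. The Newton polygon $N(g)$ of a nonzero germ $g=\sum g_{ij}z^iw^j$ is the convex hull of $\bigcup_{g_{ij}\neq0}\{(x,y):x\ge i,\ y\ge j\}$. Let $(n_1,m_1),\dots,(n_s,m_s)$ be the vertices of $N(q)$ with $n_1<\cdots<n_s$, $m_1>\cdots>m_s$; for $1\le k\le s-1$ let $T_k$ be the $y$-intercept of the line through $(n_k,m_k)$ and $(n_{k+1},m_{k+1})$. Case 3 means: $s>1$ and $T_1\le\delta$; set $(\gamma,d)=(n_1,m_1)$ and $l_2=\frac{n_2-n_1}{m_1-m_2}$. Define $\gamma_n=\gamma(\delta^{n-1}+\delta^{n-2}d+\cdots+d^{n-1})$. *)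

theory Defs
  imports "HOL-Analysis.Analysis"
begin

text \<open>A function of two complex variables is given near the origin by the (unconditionally,
  hence absolutely) convergent double power series with coefficients c on some polydisc.\<close>
definition pseries2_at0 :: "(complex \<Rightarrow> complex \<Rightarrow> complex) \<Rightarrow> (nat \<Rightarrow> nat \<Rightarrow> complex) \<Rightarrow> bool" where
  "pseries2_at0 F c \<longleftrightarrow> (\<exists>r>0. \<forall>z w. cmod z < r \<longrightarrow> cmod w < r \<longrightarrow>
       ((\<lambda>(i,j). c i j * z ^ i * w ^ j) has_sum F z w) UNIV)"

text \<open>Second component of the iterates of the skew product f(z,w) = (p z, q z w):
  f^n = (p^n, skewQ p q n).\<close>
fun skewQ :: "(complex \<Rightarrow> complex) \<Rightarrow> (complex \<Rightarrow> complex \<Rightarrow> complex) \<Rightarrow> nat \<Rightarrow> complex \<Rightarrow> complex \<Rightarrow> complex" where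
  "skewQ p q 0 z w = w"
| "skewQ p q (Suc n) z w = q ((p ^^ n) z) (skewQ p q n z w)"

definition newton_polygon :: "(nat \<Rightarrow> nat \<Rightarrow> complex) \<Rightarrow> (real \<times> real) set" where
  "newton_polygon c = convex hull
     (\<Union>(i,j)\<in>{(i,j). c i j \<noteq> 0}. {v. fst v \<ge> real i \<and> snd v \<ge> real j})"

definition newton_vertices :: "(nat \<Rightarrow> nat \<Rightarrow> complex) \<Rightarrow> (real \<times> real) set" where
  "newton_vertices c = {v. v extreme_point_of newton_polygon c}"

definition z_order_is :: "(nat \<Rightarrow> nat \<Rightarrow> complex) \<Rightarrow> nat \<Rightarrow> bool" where
  "z_order_is c k \<longleftrightarrow> (\<exists>j. c k j \<noteq> 0) \<and> (\<forall>i<k. \<forall>j. c i j = 0)"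

end

theory Submission
  imports Defs "HOL-Complex_Analysis.Complex_Analysis"
begin

text \<open>Write f^n = (P_n, Q_n), so that P_(n+1) = p(P_n) and Q_(n+1) = q(P_n, Q_n) as double power
  series. Every coefficient array involved is supported in a wedge {x \<ge> A, x + l2 y \<ge> A + l2 B}
  whose apex (A, B) carries a nonzero coefficient: (delta^n, 0) for P_n and (gamma_n, m1^n) for Q_n.
  In q(P_n, Q_n) the monomial z^i w^j of q contributes only inside the wedge with apex
  (i delta^n + j gamma_n, j m1^n), and because b is supported in the wedge with apex (n1, m1) the
  new apex (n1 delta^n + m1 gamma_n, m1^(n+1)) = (gamma_(n+1), m1^(n+1)) is reached by the single
  monomial z^n1 w^m1. The Case 3 condition T1 \<le> delta is exactly what keeps
  gamma_n + l2 m1^n \<le> l2 delta^n, which makes this bookkeeping go through. Finally, the apex of such a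
  wedge is a vertex of the Newton polygon, and the coefficients of Q_n are unique by the identity
  theorem for power series.\<close>

section \<open>Double power series\<close>

lemma has_sum_single:
  assumes "\<And>x. x \<noteq> a \<Longrightarrow> f x = 0"
  shows "(f has_sum f a) UNIV"
  by (rule has_sum_finite_neutralI[of "{a}"]) (use assms in auto)

lemma infsum_single:
  assumes "\<And>x. x \<noteq> a \<Longrightarrow> f x = 0"
  shows "infsum f UNIV = f a"
  by (rule infsumI[OF has_sum_single[OF assms]])

definition cauchy_prod2 :: "(nat \<Rightarrow> nat \<Rightarrow> 'a::comm_semiring_1) \<Rightarrow> (nat \<Rightarrow> nat \<Rightarrow> 'a) \<Rightarrow> nat \<Rightarrow> nat \<Rightarrow> 'a"
  where "cauchy_prod2 c d k l = (\<Sum>a\<le>k. \<Sum>b\<le>l. c a b * d (k - a) (l - b))"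

lemma product_family_infsum:
  fixes f g :: "'i \<Rightarrow> 'a::{real_normed_field,banach}"
  assumes f: "(\<lambda>x. norm (f x)) summable_on UNIV" and g: "(\<lambda>y. norm (g y)) summable_on UNIV"
  shows "(\<lambda>(x,y). f x * g y) abs_summable_on UNIV \<times> UNIV"
    and "(\<Sum>\<^sub>\<infinity>(x,y). f x * g y) = (\<Sum>\<^sub>\<infinity>x. f x) * (\<Sum>\<^sub>\<infinity>y. g y)"
proof -
  show abs: "(\<lambda>(x,y). f x * g y) abs_summable_on UNIV \<times> UNIV"
  proof (rule iffD2[OF Infinite_Sum.abs_summable_on_Sigma_iff], intro conjI ballI)
    fix x
    show "(\<lambda>y. norm ((\<lambda>(x,y). f x * g y) (x, y))) summable_on UNIV"
      using summable_on_cmult_right[OF g, of "norm (f x)"] by (simp add: norm_mult)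
  next
    have "(\<lambda>x. norm (f x) * (\<Sum>\<^sub>\<infinity>y. norm (g y))) summable_on UNIV"
      by (rule summable_on_cmult_left[OF f])
    moreover have "(\<Sum>\<^sub>\<infinity>y. norm (f x) * norm (g y)) = norm (f x) * (\<Sum>\<^sub>\<infinity>y. norm (g y))" for x
      by (rule infsum_cmult_right')
    moreover have "(\<Sum>\<^sub>\<infinity>y. norm (g y)) \<ge> 0" by (rule infsum_nonneg) auto
    ultimately show "(\<lambda>x. norm (\<Sum>\<^sub>\<infinity>y. norm ((\<lambda>(x,y). f x * g y) (x, y)))) summable_on UNIV"
      by (simp add: norm_mult abs_mult)
  qed
  have "(\<lambda>(x,y). f x * g y) summable_on UNIV \<times> UNIV"
    using abs_summable_summable abs by blast
  then have "(\<Sum>\<^sub>\<infinity>(x,y). f x * g y) = (\<Sum>\<^sub>\<infinity>x. \<Sum>\<^sub>\<infinity>y. f x * g y)"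
    by (simp add: infsum_Sigma'_banach)
  also have "\<dots> = (\<Sum>\<^sub>\<infinity>x. f x) * (\<Sum>\<^sub>\<infinity>y. g y)"
    by (simp add: infsum_cmult_right' infsum_cmult_left')
  finally show "(\<Sum>\<^sub>\<infinity>(x,y). f x * g y) = (\<Sum>\<^sub>\<infinity>x. f x) * (\<Sum>\<^sub>\<infinity>y. g y)" .
qed

lemma cauchy_prod2_infsum:
  fixes f g :: "nat \<Rightarrow> nat \<Rightarrow> 'a::{real_normed_field,banach}"
  assumes f: "(\<lambda>(a,b). norm (f a b)) summable_on UNIV"
    and g: "(\<lambda>(a,b). norm (g a b)) summable_on UNIV"
  shows "(\<lambda>(k,l). norm (cauchy_prod2 f g k l)) summable_on UNIV"
    and "(\<Sum>\<^sub>\<infinity>(k,l). cauchy_prod2 f g k l) = (\<Sum>\<^sub>\<infinity>(a,b). f a b) * (\<Sum>\<^sub>\<infinity>(a,b). g a b)"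
proof -
  define h where "h = (\<lambda>(x::nat\<times>nat, y::nat\<times>nat). f (fst x) (snd x) * g (fst y) (snd y))"
  have hn: "(\<lambda>x. norm (h x)) summable_on UNIV \<times> UNIV"
    using product_family_infsum(1)[of "\<lambda>x. f (fst x) (snd x)" "\<lambda>y. g (fst y) (snd y)"] f g
    by (simp add: h_def case_prod_unfold)
  have hval: "infsum h (UNIV \<times> UNIV) = (\<Sum>\<^sub>\<infinity>(a,b). f a b) * (\<Sum>\<^sub>\<infinity>(a,b). g a b)"
    using product_family_infsum(2)[of "\<lambda>x. f (fst x) (snd x)" "\<lambda>y. g (fst y) (snd y)"] f g
    by (simp add: h_def case_prod_unfold)
  text \<open>Reindex the product series by the total exponent (k,l) of each term.\<close>
  define B where "B = (\<lambda>(k::nat, l::nat). {..k} \<times> {..l})"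
  define h' where "h' = (\<lambda>(x::nat\<times>nat, y::nat\<times>nat). f (fst y) (snd y) * g (fst x - fst y) (snd x - snd y))"
  define jj where "jj = (\<lambda>(x::nat\<times>nat, y::nat\<times>nat). ((fst x + fst y, snd x + snd y), x))"
  define ii where "ii = (\<lambda>(x::nat\<times>nat, y::nat\<times>nat). (y, (fst x - fst y, snd x - snd y)))"
  have bij1: "\<And>a. a \<in> UNIV \<times> UNIV \<Longrightarrow> ii (jj a) = a"
    and bij2: "\<And>a. a \<in> UNIV \<times> UNIV \<Longrightarrow> jj a \<in> Sigma UNIV B"
    and bij3: "\<And>b. b \<in> Sigma UNIV B \<Longrightarrow> jj (ii b) = b"
    and bij4: "\<And>b. b \<in> Sigma UNIV B \<Longrightarrow> ii b \<in> UNIV \<times> UNIV"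
    by (auto simp: ii_def jj_def B_def)
  have hj: "\<And>a. a \<in> UNIV \<times> UNIV \<Longrightarrow> h' (jj a) = h a"
    by (auto simp: h'_def jj_def h_def)
  then have hnj: "\<And>a. a \<in> UNIV \<times> UNIV \<Longrightarrow> norm (h' (jj a)) = norm (h a)"
    by simp
  have h's: "(h' has_sum infsum h (UNIV \<times> UNIV)) (Sigma UNIV B)"
    using has_sum_infsum[OF abs_summable_summable[OF hn]]
      has_sum_reindex_bij_witness[of "UNIV \<times> UNIV" ii jj "Sigma UNIV B" h' h, OF bij1 bij2 bij3 bij4 hj refl]
    by blast
  have h'ns: "(\<lambda>x. norm (h' x)) summable_on (Sigma UNIV B)"
    using has_sum_infsum[OF hn]
      has_sum_reindex_bij_witness[of "UNIV \<times> UNIV" ii jj "Sigma UNIV B" "\<lambda>x. norm (h' x)" "\<lambda>x. norm (h x)",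
        OF bij1 bij2 bij3 bij4 hnj refl]
    by (auto simp: summable_on_def)
  have inner: "infsum (\<lambda>y. h' (x, y)) (B x) = cauchy_prod2 f g (fst x) (snd x)" for x
    by (simp add: B_def h'_def cauchy_prod2_def case_prod_unfold sum.cartesian_product)
  have inner_norm: "norm (cauchy_prod2 f g (fst x) (snd x)) \<le> infsum (\<lambda>y. norm (h' (x, y))) (B x)" for x
  proof -
    have fin: "finite (B x)" by (simp add: B_def case_prod_unfold)
    have "norm (cauchy_prod2 f g (fst x) (snd x)) = norm (sum (\<lambda>y. h' (x, y)) (B x))"
      using inner[of x] fin by simp
    also have "\<dots> \<le> sum (\<lambda>y. norm (h' (x, y))) (B x)" by (rule norm_sum)
    finally show ?thesis using fin by simp
  qed
  have outer: "(\<lambda>x. infsum (\<lambda>y. norm (h' (x, y))) (B x)) summable_on UNIV"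
    using summable_on_Sigma_banach[of "\<lambda>x y. norm (h' (x,y))" UNIV B] h'ns
    by (simp add: case_prod_unfold)
  show "(\<lambda>(k,l). norm (cauchy_prod2 f g k l)) summable_on UNIV"
    using summable_on_comparison_test[OF outer, of "\<lambda>x. norm (cauchy_prod2 f g (fst x) (snd x))"] inner_norm
    by (simp add: case_prod_unfold)
  have "h' summable_on (Sigma UNIV B)"
    using h's summable_on_def by blast
  then have "infsum h' (Sigma UNIV B) = infsum (\<lambda>x. infsum (\<lambda>y. h' (x, y)) (B x)) UNIV"
    by (simp add: infsum_Sigma_banach)
  also have "\<dots> = (\<Sum>\<^sub>\<infinity>(k,l). cauchy_prod2 f g k l)" using inner by (simp add: case_prod_unfold)
  finally show "(\<Sum>\<^sub>\<infinity>(k,l). cauchy_prod2 f g k l) = (\<Sum>\<^sub>\<infinity>(a,b). f a b) * (\<Sum>\<^sub>\<infinity>(a,b). g a b)"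
    using h's hval infsumI by metis
qed

definition absconv :: "(nat \<Rightarrow> nat \<Rightarrow> complex) \<Rightarrow> real \<Rightarrow> bool" where
  "absconv c \<rho> \<longleftrightarrow> (\<lambda>(k,l). norm (c k l) * \<rho>^k * \<rho>^l) summable_on UNIV"

definition wnorm :: "(nat \<Rightarrow> nat \<Rightarrow> complex) \<Rightarrow> real \<Rightarrow> real" where
  "wnorm c \<rho> = (\<Sum>\<^sub>\<infinity>(k,l). norm (c k l) * \<rho>^k * \<rho>^l)"

definition eval2 :: "(nat \<Rightarrow> nat \<Rightarrow> complex) \<Rightarrow> complex \<Rightarrow> complex \<Rightarrow> complex" where
  "eval2 c z w = (\<Sum>\<^sub>\<infinity>(k,l). c k l * z^k * w^l)"

lemma wnorm_nonneg: "\<rho> \<ge> 0 \<Longrightarrow> wnorm c \<rho> \<ge> 0"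
  unfolding wnorm_def by (rule infsum_nonneg) auto

lemma absconv_mono:
  assumes "absconv c \<rho>" "0 \<le> \<rho>'" "\<rho>' \<le> \<rho>"
  shows "absconv c \<rho>'" and "wnorm c \<rho>' \<le> wnorm c \<rho>"
proof -
  have le: "norm (c k l) * \<rho>'^k * \<rho>'^l \<le> norm (c k l) * \<rho>^k * \<rho>^l" for k l
    using assms by (intro mult_mono power_mono) auto
  show conv: "absconv c \<rho>'"
    using assms(1) unfolding absconv_def
    by (rule summable_on_comparison_test) (use le assms in auto)
  show "wnorm c \<rho>' \<le> wnorm c \<rho>"
    unfolding wnorm_def
    by (rule infsum_mono) (use conv assms(1) le in \<open>auto simp: absconv_def\<close>)
qed

lemma absconv_eval2:
  assumes "absconv c \<rho>" "norm z \<le> \<rho>" "norm w \<le> \<rho>"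
  shows "(\<lambda>(k,l). norm (c k l * z^k * w^l)) summable_on UNIV"
    and "((\<lambda>(k,l). c k l * z^k * w^l) has_sum eval2 c z w) UNIV"
    and "norm (eval2 c z w) \<le> wnorm c \<rho>"
proof -
  have "\<rho> \<ge> 0" using assms(2) norm_ge_zero order.trans by blast
  then have le: "norm (c k l * z^k * w^l) \<le> norm (c k l) * \<rho>^k * \<rho>^l" for k l
    using assms by (auto simp: norm_mult norm_power intro!: mult_mono power_mono)
  show abs: "(\<lambda>(k,l). norm (c k l * z^k * w^l)) summable_on UNIV"
    using assms(1) unfolding absconv_def
    by (rule summable_on_comparison_test) (use le in auto)
  then have "(\<lambda>(k,l). c k l * z^k * w^l) summable_on UNIV"
    by (metis (mono_tags, lifting) abs_summable_summable case_prod_unfold summable_on_cong)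
  then show "((\<lambda>(k,l). c k l * z^k * w^l) has_sum eval2 c z w) UNIV"
    unfolding eval2_def by (rule has_sum_infsum)
  have "norm (eval2 c z w) \<le> (\<Sum>\<^sub>\<infinity>(k,l). norm (c k l * z^k * w^l))"
    unfolding eval2_def using norm_infsum_bound[of "\<lambda>(k,l). c k l * z^k * w^l" UNIV] abs
    by (simp add: case_prod_unfold)
  also have "\<dots> \<le> wnorm c \<rho>"
    unfolding wnorm_def
    by (rule infsum_mono) (use abs assms(1) le in \<open>auto simp: absconv_def\<close>)
  finally show "norm (eval2 c z w) \<le> wnorm c \<rho>" .
qed

lemma eval2_origin: "eval2 c 0 0 = c 0 0"
  unfolding eval2_def by (subst infsum_single[of "(0,0)"]) auto

lemma absconv_cauchy_prod2:
  assumes c: "absconv c \<rho>" and d: "absconv d \<rho>" and \<rho>: "\<rho> \<ge> 0"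
  shows "absconv (cauchy_prod2 c d) \<rho>" and "wnorm (cauchy_prod2 c d) \<rho> \<le> wnorm c \<rho> * wnorm d \<rho>"
proof -
  define f where "f = (\<lambda>a b. norm (c a b) * \<rho>^a * \<rho>^b)"
  define g where "g = (\<lambda>a b. norm (d a b) * \<rho>^a * \<rho>^b)"
  have fs: "(\<lambda>(a,b). norm (f a b)) summable_on UNIV"
    using c \<rho> unfolding absconv_def f_def by (simp add: abs_mult)
  have gs: "(\<lambda>(a,b). norm (g a b)) summable_on UNIV"
    using d \<rho> unfolding absconv_def g_def by (simp add: abs_mult)
  have fg: "cauchy_prod2 f g k l = (\<Sum>a\<le>k. \<Sum>b\<le>l. norm (c a b) * norm (d (k-a) (l-b))) * \<rho>^k * \<rho>^l" for k l
  proof -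
    have "cauchy_prod2 f g k l = (\<Sum>a\<le>k. \<Sum>b\<le>l. norm (c a b) * norm (d (k-a) (l-b)) * (\<rho>^k * \<rho>^l))"
      unfolding cauchy_prod2_def f_def g_def
    proof (intro sum.cong refl)
      fix a b assume "a \<in> {..k}" "b \<in> {..l}"
      then have e: "\<rho>^k = \<rho>^a * \<rho>^(k-a)" "\<rho>^l = \<rho>^b * \<rho>^(l-b)"
        by (simp_all flip: power_add)
      show "norm (c a b) * \<rho> ^ a * \<rho> ^ b * (norm (d (k - a) (l - b)) * \<rho> ^ (k - a) * \<rho> ^ (l - b)) =
         norm (c a b) * norm (d (k - a) (l - b)) * (\<rho> ^ k * \<rho> ^ l)"
        by (simp only: e) (simp add: mult_ac)
    qed
    then show ?thesis by (simp add: sum_distrib_right mult.assoc)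
  qed
  have le: "norm (cauchy_prod2 c d k l) * \<rho>^k * \<rho>^l \<le> cauchy_prod2 f g k l" for k l
  proof -
    have "norm (cauchy_prod2 c d k l) \<le> (\<Sum>a\<le>k. \<Sum>b\<le>l. norm (c a b) * norm (d (k-a) (l-b)))"
      unfolding cauchy_prod2_def
      by (rule order.trans[OF norm_sum sum_mono], rule order.trans[OF norm_sum], simp add: norm_mult)
    then show ?thesis unfolding fg using \<rho>
      by (intro mult_right_mono) auto
  qed
  have fg_summable: "(\<lambda>(k,l). cauchy_prod2 f g k l) summable_on UNIV"
  proof -
    have "(\<lambda>(k,l). norm (cauchy_prod2 f g k l)) summable_on UNIV"
      by (rule cauchy_prod2_infsum(1)[OF fs gs])
    moreover have "norm (cauchy_prod2 f g k l) = cauchy_prod2 f g k l" for k l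
      unfolding fg using \<rho> by (simp add: abs_of_nonneg sum_nonneg)
    ultimately show ?thesis by simp
  qed
  show conv: "absconv (cauchy_prod2 c d) \<rho>"
    unfolding absconv_def
    by (rule summable_on_comparison_test[OF fg_summable]) (use le \<rho> in auto)
  have "wnorm (cauchy_prod2 c d) \<rho> \<le> (\<Sum>\<^sub>\<infinity>(k,l). cauchy_prod2 f g k l)"
    unfolding wnorm_def
    by (rule infsum_mono) (use conv fg_summable le in \<open>auto simp: absconv_def\<close>)
  also have "\<dots> = (\<Sum>\<^sub>\<infinity>(a,b). f a b) * (\<Sum>\<^sub>\<infinity>(a,b). g a b)"
    by (rule cauchy_prod2_infsum(2)[OF fs gs])
  finally show "wnorm (cauchy_prod2 c d) \<rho> \<le> wnorm c \<rho> * wnorm d \<rho>"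
    by (simp add: wnorm_def f_def g_def)
qed

lemma eval2_cauchy_prod2:
  assumes c: "absconv c \<rho>" and d: "absconv d \<rho>" and z: "norm z \<le> \<rho>" and w: "norm w \<le> \<rho>"
  shows "eval2 (cauchy_prod2 c d) z w = eval2 c z w * eval2 d z w"
proof -
  define f where "f = (\<lambda>a b. c a b * z^a * w^b)"
  define g where "g = (\<lambda>a b. d a b * z^a * w^b)"
  have fg: "cauchy_prod2 f g k l = cauchy_prod2 c d k l * z^k * w^l" for k l
  proof -
    have "cauchy_prod2 f g k l = (\<Sum>a\<le>k. \<Sum>b\<le>l. c a b * d (k-a) (l-b) * (z^k * w^l))"
      unfolding cauchy_prod2_def f_def g_def
    proof (intro sum.cong refl)
      fix a b assume "a \<in> {..k}" "b \<in> {..l}"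
      then have e: "z^k = z^a * z^(k-a)" "w^l = w^b * w^(l-b)"
        by (simp_all flip: power_add)
      show "c a b * z ^ a * w ^ b * (d (k - a) (l - b) * z ^ (k - a) * w ^ (l - b)) =
         c a b * d (k - a) (l - b) * (z ^ k * w ^ l)"
        by (simp only: e) (simp add: mult_ac)
    qed
    then show ?thesis by (simp add: cauchy_prod2_def sum_distrib_right mult.assoc)
  qed
  have "eval2 (cauchy_prod2 c d) z w = (\<Sum>\<^sub>\<infinity>(k,l). cauchy_prod2 f g k l)"
    unfolding eval2_def by (simp add: fg)
  also have "\<dots> = (\<Sum>\<^sub>\<infinity>(a,b). f a b) * (\<Sum>\<^sub>\<infinity>(a,b). g a b)"
    by (rule cauchy_prod2_infsum(2)) (use absconv_eval2(1)[OF c z w] absconv_eval2(1)[OF d z w] in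
        \<open>simp_all add: f_def g_def\<close>)
  also have "\<dots> = eval2 c z w * eval2 d z w" by (simp add: eval2_def f_def g_def)
  finally show ?thesis .
qed

definition monom2 :: "nat \<Rightarrow> nat \<Rightarrow> nat \<Rightarrow> nat \<Rightarrow> complex" where
  "monom2 i j k l = (if k = i \<and> l = j then 1 else 0)"

lemma absconv_monom2: "absconv (monom2 i j) \<rho>" and wnorm_monom2: "wnorm (monom2 i j) \<rho> = \<rho>^i * \<rho>^j"
proof -
  have "((\<lambda>(k,l). norm (monom2 i j k l) * \<rho>^k * \<rho>^l) has_sum
      (\<lambda>(k,l). norm (monom2 i j k l) * \<rho>^k * \<rho>^l) (i,j)) UNIV"
    by (rule has_sum_single) (auto simp: monom2_def split: if_splits)
  then show "absconv (monom2 i j) \<rho>" "wnorm (monom2 i j) \<rho> = \<rho>^i * \<rho>^j"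
    unfolding absconv_def wnorm_def by (auto simp: summable_on_def infsumI monom2_def)
qed

lemma eval2_monom2: "eval2 (monom2 i j) z w = z^i * w^j"
  unfolding eval2_def by (subst infsum_single[of "(i,j)"]) (auto simp: monom2_def split: if_splits)

fun pow2 :: "(nat \<Rightarrow> nat \<Rightarrow> complex) \<Rightarrow> nat \<Rightarrow> nat \<Rightarrow> nat \<Rightarrow> complex" where
  "pow2 c 0 = monom2 0 0"
| "pow2 c (Suc n) = cauchy_prod2 c (pow2 c n)"

lemma absconv_pow2:
  assumes c: "absconv c \<rho>" and \<rho>: "\<rho> \<ge> 0"
  shows "absconv (pow2 c n) \<rho> \<and> wnorm (pow2 c n) \<rho> \<le> wnorm c \<rho> ^ n"
proof (induction n)
  case 0
  then show ?case by (simp add: absconv_monom2 wnorm_monom2)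
next
  case (Suc n)
  then have conv: "absconv (pow2 c n) \<rho>" and bound: "wnorm (pow2 c n) \<rho> \<le> wnorm c \<rho> ^ n"
    by blast+
  have "wnorm (pow2 c (Suc n)) \<rho> \<le> wnorm c \<rho> * wnorm (pow2 c n) \<rho>"
    using absconv_cauchy_prod2(2)[OF c conv \<rho>] by simp
  also have "\<dots> \<le> wnorm c \<rho> ^ Suc n"
    using mult_left_mono[OF bound wnorm_nonneg[OF \<rho>]] by simp
  finally show ?case using absconv_cauchy_prod2(1)[OF c conv \<rho>] by simp
qed

lemma eval2_pow2:
  assumes c: "absconv c \<rho>" and z: "norm z \<le> \<rho>" and w: "norm w \<le> \<rho>"
  shows "eval2 (pow2 c n) z w = eval2 c z w ^ n"
proof (induction n)
  case 0
  then show ?case by (simp add: eval2_monom2)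
next
  case (Suc n)
  have "\<rho> \<ge> 0" using z norm_ge_zero order.trans by blast
  then have "absconv (pow2 c n) \<rho>" using absconv_pow2[OF c] by blast
  then show ?case using eval2_cauchy_prod2[OF c _ z w] Suc by simp
qed

definition mon2 :: "(nat \<Rightarrow> nat \<Rightarrow> complex) \<Rightarrow> (nat \<Rightarrow> nat \<Rightarrow> complex) \<Rightarrow> nat \<Rightarrow> nat \<Rightarrow> nat \<Rightarrow> nat \<Rightarrow> complex" where
  "mon2 G H i j = cauchy_prod2 (pow2 G i) (pow2 H j)"

lemma absconv_mon2:
  assumes G: "absconv G \<rho>" and H: "absconv H \<rho>" and \<rho>: "\<rho> \<ge> 0"
  shows "absconv (mon2 G H i j) \<rho>" and "wnorm (mon2 G H i j) \<rho> \<le> wnorm G \<rho> ^ i * wnorm H \<rho> ^ j"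
proof -
  have Gi: "absconv (pow2 G i) \<rho>" "wnorm (pow2 G i) \<rho> \<le> wnorm G \<rho> ^ i"
    using absconv_pow2[OF G \<rho>] by blast+
  have Hj: "absconv (pow2 H j) \<rho>" "wnorm (pow2 H j) \<rho> \<le> wnorm H \<rho> ^ j"
    using absconv_pow2[OF H \<rho>] by blast+
  show "absconv (mon2 G H i j) \<rho>"
    unfolding mon2_def by (rule absconv_cauchy_prod2(1)[OF Gi(1) Hj(1) \<rho>])
  have "wnorm (mon2 G H i j) \<rho> \<le> wnorm (pow2 G i) \<rho> * wnorm (pow2 H j) \<rho>"
    unfolding mon2_def by (rule absconv_cauchy_prod2(2)[OF Gi(1) Hj(1) \<rho>])
  also have "\<dots> \<le> wnorm G \<rho> ^ i * wnorm H \<rho> ^ j"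
    by (rule mult_mono[OF Gi(2) Hj(2)]) (use wnorm_nonneg[OF \<rho>] in auto)
  finally show "wnorm (mon2 G H i j) \<rho> \<le> wnorm G \<rho> ^ i * wnorm H \<rho> ^ j" .
qed

lemma eval2_mon2:
  assumes G: "absconv G \<rho>" and H: "absconv H \<rho>" and z: "norm z \<le> \<rho>" and w: "norm w \<le> \<rho>"
  shows "eval2 (mon2 G H i j) z w = eval2 G z w ^ i * eval2 H z w ^ j"
proof -
  have "\<rho> \<ge> 0" using z norm_ge_zero order.trans by blast
  then have "absconv (pow2 G i) \<rho>" "absconv (pow2 H j) \<rho>"
    using absconv_pow2 G H by blast+
  then show ?thesis
    unfolding mon2_def by (simp add: eval2_cauchy_prod2[OF _ _ z w] eval2_pow2[OF G z w] eval2_pow2[OF H z w])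
qed

section \<open>Substitution into a double power series\<close>

definition subst2 :: "(nat \<Rightarrow> nat \<Rightarrow> complex) \<Rightarrow> (nat \<Rightarrow> nat \<Rightarrow> complex) \<Rightarrow> (nat \<Rightarrow> nat \<Rightarrow> complex) \<Rightarrow> nat \<Rightarrow> nat \<Rightarrow> complex" where
  "subst2 B G H k l = (\<Sum>\<^sub>\<infinity>(i,j). B i j * mon2 G H i j k l)"

lemma summable_subst2_majorant:
  assumes B: "(\<lambda>(i,j). norm (B i j) * s^i * s^j) summable_on UNIV"
    and G: "absconv G \<rho>" and H: "absconv H \<rho>" and \<rho>: "\<rho> \<ge> 0"
    and sG: "wnorm G \<rho> \<le> s" and sH: "wnorm H \<rho> \<le> s"
  shows "(\<lambda>((i,j),(k,l)). norm (B i j) * (norm (mon2 G H i j k l) * \<rho>^k * \<rho>^l)) summable_on UNIV \<times> UNIV"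
proof -
  define U where "U = (\<lambda>((i,j),(k,l)). norm (B i j) * (norm (mon2 G H i j k l) * \<rho>^k * \<rho>^l))"
  define g where "g = (\<lambda>(i,j). norm (B i j) * wnorm (mon2 G H i j) \<rho>)"
  have inner: "((\<lambda>kl. U (ij,kl)) has_sum g ij) UNIV" for ij
  proof -
    obtain i j where ij: "ij = (i,j)" by fastforce
    have "((\<lambda>(k,l). norm (mon2 G H i j k l) * \<rho>^k * \<rho>^l) has_sum wnorm (mon2 G H i j) \<rho>) UNIV"
      using absconv_mon2(1)[OF G H \<rho>] unfolding absconv_def wnorm_def by (rule has_sum_infsum)
    then show ?thesis
      unfolding g_def U_def ij using has_sum_cmult_right by (fastforce simp: case_prod_unfold)
  qed
  have g_le: "g (i,j) \<le> norm (B i j) * s^i * s^j" for i j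
  proof -
    have "wnorm (mon2 G H i j) \<rho> \<le> wnorm G \<rho> ^ i * wnorm H \<rho> ^ j"
      by (rule absconv_mon2(2)[OF G H \<rho>])
    also have "\<dots> \<le> s ^ i * s ^ j"
      using wnorm_nonneg[OF \<rho>, of G] wnorm_nonneg[OF \<rho>, of H] sG sH
      by (intro mult_mono power_mono) auto
    finally show ?thesis
      unfolding g_def by (simp add: mult.assoc mult_left_mono)
  qed
  have "g summable_on UNIV"
    by (rule summable_on_comparison_test[OF B])
      (use g_le wnorm_nonneg[OF \<rho>] in \<open>auto simp: g_def case_prod_unfold\<close>)
  then have "U summable_on UNIV \<times> UNIV"
    by (rule summable_on_SigmaI[OF inner]) (use \<rho> in \<open>auto simp: U_def case_prod_unfold\<close>)
  then show ?thesis by (simp add: U_def)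
qed

lemma absconv_subst2:
  assumes B: "(\<lambda>(i,j). norm (B i j) * s^i * s^j) summable_on UNIV"
    and G: "absconv G \<rho>" and H: "absconv H \<rho>" and \<rho>: "\<rho> \<ge> 0"
    and sG: "wnorm G \<rho> \<le> s" and sH: "wnorm H \<rho> \<le> s"
  shows "absconv (subst2 B G H) \<rho>"
proof -
  define U where "U = (\<lambda>(kl, ij). norm (B (fst ij) (snd ij)) *
      (norm (mon2 G H (fst ij) (snd ij) (fst kl) (snd kl)) * \<rho>^(fst kl) * \<rho>^(snd kl)))"
  have "U summable_on UNIV \<times> UNIV"
    using summable_on_swap[THEN iffD1, OF summable_subst2_majorant[OF assms]]
    by (simp add: U_def case_prod_unfold)
  then have fibres: "(\<lambda>ij. U (kl, ij)) summable_on UNIV" for kl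
    using summable_on_SigmaD1[of "\<lambda>kl ij. U (kl, ij)" UNIV "\<lambda>_. UNIV"] by auto
  have sums: "(\<lambda>kl. \<Sum>\<^sub>\<infinity>ij. U (kl, ij)) summable_on UNIV"
    using summable_on_Sigma_banach[of "\<lambda>kl ij. U (kl, ij)" UNIV "\<lambda>_. UNIV"] \<open>U summable_on UNIV \<times> UNIV\<close>
    by auto
  have le: "norm (subst2 B G H k l) * \<rho>^k * \<rho>^l \<le> (\<Sum>\<^sub>\<infinity>ij. U ((k,l), ij))" for k l
  proof -
    define r where "r = \<rho>^k * \<rho>^l"
    define t where "t = (\<lambda>ij. B (fst ij) (snd ij) * mon2 G H (fst ij) (snd ij) k l)"
    have U_eq: "U ((k,l), ij) = norm (t ij) * r" for ij
      by (simp add: U_def t_def r_def norm_mult mult_ac)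
    consider "r = 0" | "r > 0" using \<rho> by (fastforce simp: r_def)
    then have "norm (subst2 B G H k l) * r \<le> (\<Sum>\<^sub>\<infinity>ij. U ((k,l), ij))"
    proof cases
      case 1
      then show ?thesis by (simp add: U_eq)
    next
      case 2
      have "(\<lambda>ij. U ((k,l), ij) * (1 / r)) summable_on UNIV"
        using fibres by (rule summable_on_cmult_left)
      then have t_abs: "(\<lambda>ij. norm (t ij)) summable_on UNIV"
        using 2 by (simp add: U_eq)
      have "norm (subst2 B G H k l) \<le> (\<Sum>\<^sub>\<infinity>ij. norm (t ij))"
        unfolding subst2_def using norm_infsum_bound[of t UNIV] t_abs
        by (simp add: t_def case_prod_unfold)
      then have "norm (subst2 B G H k l) * r \<le> (\<Sum>\<^sub>\<infinity>ij. norm (t ij)) * r"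
        using 2 by (intro mult_right_mono) auto
      also have "\<dots> = (\<Sum>\<^sub>\<infinity>ij. U ((k,l), ij))"
        by (simp add: U_eq infsum_cmult_left')
      finally show ?thesis .
    qed
    then show ?thesis by (simp add: r_def mult.assoc)
  qed
  show ?thesis unfolding absconv_def
    by (rule summable_on_comparison_test[OF sums]) (use le \<rho> in \<open>auto simp: case_prod_unfold\<close>)
qed

lemma eval2_subst2:
  assumes B: "(\<lambda>(i,j). norm (B i j) * s^i * s^j) summable_on UNIV"
    and G: "absconv G \<rho>" and H: "absconv H \<rho>" and \<rho>: "\<rho> \<ge> 0"
    and sG: "wnorm G \<rho> \<le> s" and sH: "wnorm H \<rho> \<le> s"
    and z: "norm z \<le> \<rho>" and w: "norm w \<le> \<rho>"
  shows "eval2 (subst2 B G H) z w = (\<Sum>\<^sub>\<infinity>(i,j). B i j * eval2 G z w ^ i * eval2 H z w ^ j)"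
proof -
  define V where "V = (\<lambda>ij kl. B (fst ij) (snd ij) * mon2 G H (fst ij) (snd ij) (fst kl) (snd kl) *
      z^(fst kl) * w^(snd kl))"
  have "(\<lambda>(ij,kl). norm (V ij kl)) summable_on UNIV \<times> UNIV"
    by (rule summable_on_comparison_test[OF summable_subst2_majorant[OF B G H \<rho> sG sH]])
      (use z w \<rho> in \<open>auto simp: V_def case_prod_unfold norm_mult norm_power mult.assoc
         intro!: mult_left_mono mult_mono power_mono\<close>)
  then have "(\<lambda>(ij,kl). V ij kl) summable_on UNIV \<times> UNIV"
    using abs_summable_summable by (simp add: case_prod_unfold)
  then have swap: "(\<Sum>\<^sub>\<infinity>ij. \<Sum>\<^sub>\<infinity>kl. V ij kl) = (\<Sum>\<^sub>\<infinity>kl. \<Sum>\<^sub>\<infinity>ij. V ij kl)"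
    by (rule infsum_swap_banach)
  have rows: "(\<Sum>\<^sub>\<infinity>kl. V ij kl) = B (fst ij) (snd ij) * eval2 G z w ^ fst ij * eval2 H z w ^ snd ij" for ij
  proof -
    have "(\<Sum>\<^sub>\<infinity>kl. V ij kl) = B (fst ij) (snd ij) * eval2 (mon2 G H (fst ij) (snd ij)) z w"
      unfolding V_def eval2_def by (simp add: infsum_cmult_right'[symmetric] case_prod_unfold mult_ac)
    then show ?thesis using eval2_mon2[OF G H z w] by (simp add: mult_ac)
  qed
  have columns: "(\<Sum>\<^sub>\<infinity>ij. V ij kl) = subst2 B G H (fst kl) (snd kl) * z^(fst kl) * w^(snd kl)" for kl
  proof -
    have "(\<Sum>\<^sub>\<infinity>ij. V ij kl) =
        (\<Sum>\<^sub>\<infinity>ij. B (fst ij) (snd ij) * mon2 G H (fst ij) (snd ij) (fst kl) (snd kl) * (z^(fst kl) * w^(snd kl)))"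
      by (rule infsum_cong) (simp add: V_def mult_ac)
    also have "\<dots> = (\<Sum>\<^sub>\<infinity>ij. B (fst ij) (snd ij) * mon2 G H (fst ij) (snd ij) (fst kl) (snd kl)) * (z^(fst kl) * w^(snd kl))"
      by (rule infsum_cmult_left')
    finally show ?thesis by (simp add: subst2_def case_prod_unfold mult_ac)
  qed
  have "eval2 (subst2 B G H) z w = (\<Sum>\<^sub>\<infinity>kl. \<Sum>\<^sub>\<infinity>ij. V ij kl)"
    by (simp add: eval2_def columns case_prod_unfold)
  also have "\<dots> = (\<Sum>\<^sub>\<infinity>ij. \<Sum>\<^sub>\<infinity>kl. V ij kl)"
    by (rule swap[symmetric])
  also have "\<dots> = (\<Sum>\<^sub>\<infinity>(i,j). B i j * eval2 G z w ^ i * eval2 H z w ^ j)"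
    by (simp add: rows case_prod_unfold)
  finally show ?thesis .
qed

section \<open>Germs given by double power series\<close>

lemma wnorm_le_scaled:
  assumes c: "absconv c \<rho>" and \<rho>: "\<rho> > 0" and \<rho>': "0 \<le> \<rho>'" "\<rho>' \<le> \<rho>" and c00: "c 0 0 = 0"
  shows "wnorm c \<rho>' \<le> (\<rho>' / \<rho>) * wnorm c \<rho>"
proof -
  have le: "norm (c k l) * \<rho>'^k * \<rho>'^l \<le> (\<rho>' / \<rho>) * (norm (c k l) * \<rho>^k * \<rho>^l)" for k l
  proof (cases "k + l = 0")
    case True
    then show ?thesis using c00 by simp
  next
    case False
    have t: "0 \<le> \<rho>' / \<rho>" "\<rho>' / \<rho> \<le> 1" using \<rho> \<rho>' by auto
    have "\<rho>'^k * \<rho>'^l = (\<rho>' / \<rho>)^(k+l) * \<rho>^(k+l)"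
      using \<rho> by (simp add: power_add power_divide)
    also have "\<dots> \<le> (\<rho>' / \<rho>) * \<rho>^(k+l)"
      using power_decreasing[of 1 "k+l" "\<rho>' / \<rho>"] t False \<rho> by (intro mult_right_mono) auto
    finally have "\<rho>'^k * \<rho>'^l \<le> (\<rho>' / \<rho>) * (\<rho>^k * \<rho>^l)" by (simp add: power_add)
    then have "norm (c k l) * (\<rho>'^k * \<rho>'^l) \<le> norm (c k l) * ((\<rho>' / \<rho>) * (\<rho>^k * \<rho>^l))"
      by (rule mult_left_mono) simp
    then show ?thesis by (simp add: mult_ac)
  qed
  have "wnorm c \<rho>' \<le> (\<Sum>\<^sub>\<infinity>(k,l). (\<rho>' / \<rho>) * (norm (c k l) * \<rho>^k * \<rho>^l))"
    unfolding wnorm_def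
  proof (rule infsum_mono)
    show "(\<lambda>(k,l). norm (c k l) * \<rho>'^k * \<rho>'^l) summable_on UNIV"
      using absconv_mono(1)[OF c \<rho>'] by (simp add: absconv_def)
    show "(\<lambda>(k,l). (\<rho>' / \<rho>) * (norm (c k l) * \<rho>^k * \<rho>^l)) summable_on UNIV"
      using summable_on_cmult_right[OF c[unfolded absconv_def], of "\<rho>' / \<rho>"]
      by (simp add: case_prod_unfold)
  qed (use le in \<open>auto simp: case_prod_unfold\<close>)
  also have "\<dots> = (\<rho>' / \<rho>) * wnorm c \<rho>"
    unfolding wnorm_def using infsum_cmult_right'[of "\<rho>' / \<rho>" "\<lambda>(k,l). norm (c k l) * \<rho>^k * \<rho>^l" UNIV]
    by (simp add: case_prod_unfold)
  finally show ?thesis .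
qed

lemma exists_radius_wnorm_less:
  assumes c: "absconv c \<rho>" and \<rho>: "\<rho> > 0" and c00: "c 0 0 = 0" and R: "R > 0"
  obtains \<rho>' where "0 < \<rho>'" "\<rho>' \<le> \<rho>" "wnorm c \<rho>' < R"
proof
  define N where "N = wnorm c \<rho>"
  have N: "N \<ge> 0" using wnorm_nonneg \<rho> by (simp add: N_def)
  define \<rho>' where "\<rho>' = min \<rho> (\<rho> * R / (2 * (N + 1)))"
  show pos: "0 < \<rho>'" and le: "\<rho>' \<le> \<rho>" using \<rho> R N by (auto simp: \<rho>'_def)
  have "\<rho>' \<le> \<rho> * R / (2 * (N + 1))" by (simp add: \<rho>'_def)
  then have ratio: "\<rho>' / \<rho> \<le> R / (2 * (N + 1))"
    using \<rho> N by (simp add: field_simps)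
  have "wnorm c \<rho>' \<le> (\<rho>' / \<rho>) * N"
    unfolding N_def by (rule wnorm_le_scaled[OF c \<rho> _ le c00]) (use pos in simp)
  also have "\<dots> \<le> R / (2 * (N + 1)) * N"
    using ratio N by (intro mult_right_mono) auto
  also have "\<dots> < R"
  proof -
    have "N / (2 * (N + 1)) < 1" using N by (simp add: field_simps)
    then show ?thesis using mult_strict_left_mono[OF _ R] by fastforce
  qed
  finally show "wnorm c \<rho>' < R" .
qed

lemma powser_eq_0_coeffs:
  fixes a :: "nat \<Rightarrow> complex"
  assumes s: "s > 0" and sums: "\<And>x. norm x < s \<Longrightarrow> (\<lambda>n. a n * x^n) sums 0"
  shows "a n = 0"
proof (rule ccontr)
  assume an: "a n \<noteq> 0"
  have "a 0 = 0" using sums[of 0] s by simp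
  with an have "n > 0" by (cases n) auto
  text \<open>A nonzero coefficient forces isolated zeros of the sum, which vanishes identically.\<close>
  obtain t where t: "0 < t" and nz: "\<And>x::complex. x \<in> cball 0 t - {0} \<Longrightarrow> (\<lambda>_. 0::complex) x \<noteq> 0"
    by (rule powser_0_nonzero[where r=s and a=a and \<xi>=0 and f="\<lambda>_. 0" and m=n]) (use s sums an \<open>n > 0\<close> in auto)
  show False using nz[of "complex_of_real t"] t by simp
qed

lemma absconv_eval2_eq_0_coeffs:
  assumes \<rho>: "\<rho> > 0" and c: "absconv c \<rho>"
    and zero: "\<And>z w. norm z < \<rho> \<Longrightarrow> norm w < \<rho> \<Longrightarrow> eval2 c z w = 0"
  shows "c k l = 0"
proof -
  define A where "A = (\<lambda>k w. \<Sum>\<^sub>\<infinity>l. c k l * w^l)"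
  have rows: "((\<lambda>l. c k l * w^l) has_sum A k w) UNIV" if w: "norm w < \<rho>" for k w
  proof -
    define z0 where "z0 = complex_of_real (\<rho> / 2)"
    have z0: "norm z0 \<le> \<rho>" "z0 \<noteq> 0" using \<rho> by (auto simp: z0_def)
    have "(\<lambda>(k,l). c k l * z0^k * w^l) summable_on UNIV"
      using absconv_eval2(2)[OF c z0(1), of w] w by (auto intro: has_sum_imp_summable)
    then have "(\<lambda>l. c k l * z0^k * w^l) summable_on UNIV"
      using summable_on_SigmaD1[of "\<lambda>k l. c k l * z0^k * w^l" UNIV "\<lambda>_. UNIV" k] by simp
    then have "(\<lambda>l. (c k l * z0^k * w^l) * (1 / z0^k)) summable_on UNIV"
      by (rule summable_on_cmult_left)
    then have "(\<lambda>l. c k l * w^l) summable_on UNIV" using z0(2) by simp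
    then show ?thesis unfolding A_def by (rule has_sum_infsum)
  qed
  have A0: "A k w = 0" if w: "norm w < \<rho>" for k w
  proof (rule powser_eq_0_coeffs[OF \<rho>])
    fix x :: complex assume x: "norm x < \<rho>"
    have "((\<lambda>(k,l). c k l * x^k * w^l) has_sum eval2 c x w) UNIV"
      using absconv_eval2(2)[OF c] x w by simp
    then have f: "((\<lambda>(k,l). c k l * x^k * w^l) has_sum 0) UNIV"
      using zero[OF x w] by simp
    then have f': "(\<lambda>(k,l). c k l * x^k * w^l) summable_on UNIV \<times> UNIV"
      by (auto intro: has_sum_imp_summable)
    have row: "(\<Sum>\<^sub>\<infinity>l. c k l * x^k * w^l) = A k w * x^k" for k
    proof -
      have "(\<Sum>\<^sub>\<infinity>l. c k l * x^k * w^l) = (\<Sum>\<^sub>\<infinity>l. (c k l * w^l) * x^k)"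
        by (rule infsum_cong) (simp add: mult_ac)
      also have "\<dots> = A k w * x^k" unfolding A_def by (rule infsum_cmult_left')
      finally show ?thesis .
    qed
    have "(\<lambda>k. A k w * x^k) summable_on UNIV"
      using summable_on_Sigma_banach[of "\<lambda>k l. c k l * x^k * w^l" UNIV "\<lambda>_. UNIV"] f'
      by (simp add: row)
    moreover have "(\<Sum>\<^sub>\<infinity>k. A k w * x^k) = 0"
      using infsum_Sigma'_banach[of "\<lambda>k l. c k l * x^k * w^l" UNIV "\<lambda>_. UNIV"] f' infsumI[OF f]
      by (simp add: row)
    ultimately show "(\<lambda>k. A k w * x^k) sums 0"
      by (metis has_sum_imp_sums has_sum_infsum)
  qed
  show ?thesis
  proof (rule powser_eq_0_coeffs[OF \<rho>])
    fix w :: complex assume "norm w < \<rho>"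
    then show "(\<lambda>l. c k l * w^l) sums 0"
      using rows A0 has_sum_imp_sums by fastforce
  qed
qed

lemma pseries2_at0_imp_absconv:
  assumes "pseries2_at0 F c"
  obtains \<rho> where "\<rho> > 0" "absconv c \<rho>" "\<And>z w. norm z \<le> \<rho> \<Longrightarrow> norm w \<le> \<rho> \<Longrightarrow> F z w = eval2 c z w"
proof -
  obtain r where r: "r > 0" and sums: "\<And>z w. norm z < r \<Longrightarrow> norm w < r \<Longrightarrow>
       ((\<lambda>(i,j). c i j * z^i * w^j) has_sum F z w) UNIV"
    using assms unfolding pseries2_at0_def by blast
  define \<rho> where "\<rho> = r / 2"
  have \<rho>: "\<rho> > 0" "\<rho> < r" using r by (auto simp: \<rho>_def)
  have "(\<lambda>(i,j). c i j * (complex_of_real \<rho>)^i * (complex_of_real \<rho>)^j) summable_on UNIV"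
    using sums[of "complex_of_real \<rho>" "complex_of_real \<rho>"] \<rho> by (auto simp: summable_on_def)
  then have "(\<lambda>x. norm ((\<lambda>(i,j). c i j * (complex_of_real \<rho>)^i * (complex_of_real \<rho>)^j) x)) summable_on UNIV"
    using summable_on_iff_abs_summable_on_complex by blast
  then have "absconv c \<rho>"
    unfolding absconv_def using \<rho> by (simp add: case_prod_unfold norm_mult norm_power)
  moreover have "F z w = eval2 c z w" if "norm z \<le> \<rho>" "norm w \<le> \<rho>" for z w
    using sums[of z w] that \<rho> unfolding eval2_def by (simp add: infsumI)
  ultimately show ?thesis by (rule that[OF \<rho>(1)])
qed

lemma absconv_imp_pseries2_at0:
  assumes \<rho>: "\<rho> > 0" and c: "absconv c \<rho>"
    and F: "\<And>z w. norm z \<le> \<rho> \<Longrightarrow> norm w \<le> \<rho> \<Longrightarrow> F z w = eval2 c z w"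
  shows "pseries2_at0 F c"
  unfolding pseries2_at0_def
proof (intro exI[of _ \<rho>] conjI allI impI \<rho>)
  fix z w :: complex assume "norm z < \<rho>" "norm w < \<rho>"
  then show "((\<lambda>(i,j). c i j * z^i * w^j) has_sum F z w) UNIV"
    using absconv_eval2(2)[OF c] F by simp
qed

lemma pseries2_at0_unique:
  assumes c: "pseries2_at0 F c" and d: "pseries2_at0 F d"
  shows "c = d"
proof -
  obtain \<rho>1 where \<rho>1: "\<rho>1 > 0" "absconv c \<rho>1"
    and Fc: "\<And>z w. norm z \<le> \<rho>1 \<Longrightarrow> norm w \<le> \<rho>1 \<Longrightarrow> F z w = eval2 c z w"
    using pseries2_at0_imp_absconv[OF c] by blast
  obtain \<rho>2 where \<rho>2: "\<rho>2 > 0" "absconv d \<rho>2"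
    and Fd: "\<And>z w. norm z \<le> \<rho>2 \<Longrightarrow> norm w \<le> \<rho>2 \<Longrightarrow> F z w = eval2 d z w"
    using pseries2_at0_imp_absconv[OF d] by blast
  define \<rho> where "\<rho> = min \<rho>1 \<rho>2"
  have \<rho>: "\<rho> > 0" "\<rho> \<le> \<rho>1" "\<rho> \<le> \<rho>2" using \<rho>1 \<rho>2 by (auto simp: \<rho>_def)
  have cd: "absconv c \<rho>" "absconv d \<rho>"
    using absconv_mono(1) \<rho>1 \<rho>2 \<rho> by auto
  define e where "e = (\<lambda>k l. c k l - d k l)"
  have "absconv e \<rho>"
    unfolding absconv_def
  proof (rule summable_on_comparison_test)
    show "(\<lambda>x. (\<lambda>(k,l). norm (c k l) * \<rho>^k * \<rho>^l) x + (\<lambda>(k,l). norm (d k l) * \<rho>^k * \<rho>^l) x) summable_on UNIV"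
      using cd unfolding absconv_def by (rule summable_on_add)
  next
    fix x :: "nat \<times> nat"
    have "norm (e (fst x) (snd x)) * (\<rho>^fst x * \<rho>^snd x) \<le>
        (norm (c (fst x) (snd x)) + norm (d (fst x) (snd x))) * (\<rho>^fst x * \<rho>^snd x)"
      unfolding e_def by (rule mult_right_mono[OF norm_triangle_ineq4]) (use \<rho> in simp)
    then show "(\<lambda>(k,l). norm (e k l) * \<rho>^k * \<rho>^l) x \<le>
        (\<lambda>(k,l). norm (c k l) * \<rho>^k * \<rho>^l) x + (\<lambda>(k,l). norm (d k l) * \<rho>^k * \<rho>^l) x"
      by (simp add: case_prod_unfold algebra_simps)
  qed (use \<rho> in \<open>auto simp: case_prod_unfold\<close>)
  moreover have "eval2 e z w = 0" if "norm z < \<rho>" "norm w < \<rho>" for z w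
  proof -
    have zw: "norm z \<le> \<rho>" "norm w \<le> \<rho>" using that by auto
    have "((\<lambda>(k,l). c k l * z^k * w^l - d k l * z^k * w^l) has_sum eval2 c z w - eval2 d z w) UNIV"
      using has_sum_add[OF absconv_eval2(2)[OF cd(1) zw] has_sum_uminusI[OF absconv_eval2(2)[OF cd(2) zw]]]
      by (simp add: case_prod_unfold)
    moreover have "eval2 c z w = eval2 d z w"
      using Fc[of z w] Fd[of z w] zw \<rho> by simp
    ultimately show ?thesis
      unfolding eval2_def e_def by (simp add: infsumI case_prod_unfold algebra_simps)
  qed
  ultimately have "e k l = 0" for k l using absconv_eval2_eq_0_coeffs[OF \<rho>(1)] by blast
  then show ?thesis by (auto simp: e_def)
qed

lemma pseries2_at0_small_wnorm:
  assumes G: "pseries2_at0 G c" and G0: "G 0 0 = 0" and s: "s > 0"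
  obtains \<rho> where "\<rho> > 0" "absconv c \<rho>" "wnorm c \<rho> < s"
    "\<And>z w. norm z \<le> \<rho> \<Longrightarrow> norm w \<le> \<rho> \<Longrightarrow> G z w = eval2 c z w"
proof -
  obtain \<rho>G where \<rho>G: "\<rho>G > 0" "absconv c \<rho>G"
    and G_eval: "\<And>z w. norm z \<le> \<rho>G \<Longrightarrow> norm w \<le> \<rho>G \<Longrightarrow> G z w = eval2 c z w"
    using pseries2_at0_imp_absconv[OF G] by blast
  have "c 0 0 = 0" using G_eval[of 0 0] \<rho>G G0 by (simp add: eval2_origin)
  then obtain \<rho> where \<rho>: "0 < \<rho>" "\<rho> \<le> \<rho>G" "wnorm c \<rho> < s"
    using exists_radius_wnorm_less[OF \<rho>G(2,1) _ s] by blast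
  show ?thesis
    by (rule that[OF \<rho>(1) absconv_mono(1)[OF \<rho>G(2) _ \<rho>(2)] \<rho>(3)]) (use \<rho> G_eval in auto)
qed

lemma pseries2_at0_subst2:
  assumes F: "pseries2_at0 F B" and G: "pseries2_at0 G cG" and H: "pseries2_at0 H cH"
    and G0: "G 0 0 = 0" and H0: "H 0 0 = 0"
  shows "pseries2_at0 (\<lambda>z w. F (G z w) (H z w)) (subst2 B cG cH)"
proof -
  obtain R where R: "R > 0" and F_sums: "\<And>x y. norm x < R \<Longrightarrow> norm y < R \<Longrightarrow>
      ((\<lambda>(i,j). B i j * x^i * y^j) has_sum F x y) UNIV"
    using F unfolding pseries2_at0_def by blast
  define s where "s = R / 2"
  have s: "0 < s" "s < R" using R by (auto simp: s_def)
  have "(\<lambda>(i,j). B i j * (complex_of_real s)^i * (complex_of_real s)^j) summable_on UNIV"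
    using F_sums[of "complex_of_real s" "complex_of_real s"] s by (auto intro: has_sum_imp_summable)
  then have "(\<lambda>ij. norm ((\<lambda>(i,j). B i j * (complex_of_real s)^i * (complex_of_real s)^j) ij)) summable_on UNIV"
    using summable_on_iff_abs_summable_on_complex by blast
  then have B_abs: "(\<lambda>(i,j). norm (B i j) * s^i * s^j) summable_on UNIV"
    using s by (simp add: case_prod_unfold norm_mult norm_power)
  text \<open>Shrink the radius until the values of G and H stay inside the polydisc of convergence of F.\<close>
  obtain \<rho>1 where \<rho>1: "0 < \<rho>1" "absconv cG \<rho>1" "wnorm cG \<rho>1 < s"
    and G_eval: "\<And>z w. norm z \<le> \<rho>1 \<Longrightarrow> norm w \<le> \<rho>1 \<Longrightarrow> G z w = eval2 cG z w"
    using pseries2_at0_small_wnorm[OF G G0 s(1)] by blast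
  obtain \<rho>2 where \<rho>2: "0 < \<rho>2" "absconv cH \<rho>2" "wnorm cH \<rho>2 < s"
    and H_eval: "\<And>z w. norm z \<le> \<rho>2 \<Longrightarrow> norm w \<le> \<rho>2 \<Longrightarrow> H z w = eval2 cH z w"
    using pseries2_at0_small_wnorm[OF H H0 s(1)] by blast
  define \<rho> where "\<rho> = min \<rho>1 \<rho>2"
  have \<rho>: "0 < \<rho>" "\<rho> \<le> \<rho>1" "\<rho> \<le> \<rho>2" using \<rho>1 \<rho>2 by (auto simp: \<rho>_def)
  have conv: "absconv cG \<rho>" "absconv cH \<rho>"
    using absconv_mono(1) \<rho>1 \<rho>2 \<rho> by auto
  have small: "wnorm cG \<rho> \<le> s" "wnorm cH \<rho> \<le> s"
    using absconv_mono(2)[OF \<rho>1(2), of \<rho>] absconv_mono(2)[OF \<rho>2(2), of \<rho>] \<rho> \<rho>1 \<rho>2 by auto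
  show ?thesis
  proof (rule absconv_imp_pseries2_at0[OF \<rho>(1) absconv_subst2[OF B_abs conv _ small]])
    fix z w :: complex assume z: "norm z \<le> \<rho>" and w: "norm w \<le> \<rho>"
    have "norm (eval2 cG z w) < R" "norm (eval2 cH z w) < R"
      using absconv_eval2(3)[OF conv(1) z w] absconv_eval2(3)[OF conv(2) z w] small s by auto
    moreover have "G z w = eval2 cG z w" "H z w = eval2 cH z w"
      using G_eval H_eval z w \<rho> by auto
    ultimately have "F (G z w) (H z w) = (\<Sum>\<^sub>\<infinity>(i,j). B i j * eval2 cG z w ^ i * eval2 cH z w ^ j)"
      using F_sums[THEN infsumI] by simp
    also have "\<dots> = eval2 (subst2 B cG cH) z w"
      by (rule eval2_subst2[OF B_abs conv _ small z w, symmetric]) (use \<rho> in simp)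
    finally show "F (G z w) (H z w) = eval2 (subst2 B cG cH) z w" .
  qed (use \<rho> in simp)
qed

lemma pseries2_at0_holomorphic:
  fixes p :: "complex \<Rightarrow> complex"
  assumes r: "r > 0" and p: "p holomorphic_on ball 0 r"
  shows "pseries2_at0 (\<lambda>z w. p z) (\<lambda>i j. if j = 0 then (deriv ^^ i) p 0 / fact i else 0)"
  unfolding pseries2_at0_def
proof (intro exI[of _ r] conjI allI impI r)
  fix x y :: complex assume x: "norm x < r" and "norm y < r"
  define a where "a = (\<lambda>k. (deriv ^^ k) p 0 / fact k)"
  define s where "s = (norm x + r) / 2"
  have s: "norm x < s" "s < r" using x by (auto simp: s_def)
  then have "0 < s" using norm_ge_zero[of x] by linarith
  have "(\<lambda>n. a n * (complex_of_real s)^n) sums p (complex_of_real s)"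
    using holomorphic_power_series[OF p, of "complex_of_real s"] s norm_ge_zero[of x]
    by (simp add: a_def dist_norm)
  then have "summable (\<lambda>n. a n * (complex_of_real s)^n)" by (rule sums_summable)
  then have "summable (\<lambda>n. norm (a n * x^n))"
    by (rule powser_insidea) (use s \<open>0 < s\<close> in simp)
  moreover have "(\<lambda>n. a n * x^n) sums p x"
    using holomorphic_power_series[OF p, of x] x by (simp add: a_def dist_norm)
  ultimately have row: "((\<lambda>n. a n * x^n) has_sum p x) UNIV"
    by (rule norm_summable_imp_has_sum)
  define g where "g = (\<lambda>(i,j). (if j = 0 then a i else 0) * x^i * y^j)"
  have inj: "inj_on (\<lambda>i::nat. (i, 0::nat)) UNIV" by (auto simp: inj_on_def)
  have "g \<circ> (\<lambda>i. (i, 0::nat)) = (\<lambda>n. a n * x^n)" by (auto simp: g_def)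
  then have "(g has_sum p x) (range (\<lambda>i. (i, 0::nat)))"
    using has_sum_reindex[OF inj, of g "p x"] row by simp
  moreover have "g ij = 0" if "ij \<in> UNIV - range (\<lambda>i. (i, 0::nat))" for ij
    using that by (cases ij) (auto simp: g_def)
  then have "(g has_sum p x) (range (\<lambda>i. (i, 0::nat))) \<longleftrightarrow> (g has_sum p x) UNIV"
    by (intro has_sum_cong_neutral) auto
  ultimately have "(g has_sum p x) UNIV" by blast
  then show "((\<lambda>(i,j). (if j = 0 then (deriv ^^ i) p 0 / fact i else 0) * x^i * y^j) has_sum p x) UNIV"
    unfolding g_def a_def .
qed

lemma pseries2_at0_origin:
  assumes "pseries2_at0 F c"
  shows "F 0 0 = c 0 0"
proof -
  obtain \<rho> where \<rho>: "\<rho> > 0" "absconv c \<rho>"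
    and F: "\<And>z w. norm z \<le> \<rho> \<Longrightarrow> norm w \<le> \<rho> \<Longrightarrow> F z w = eval2 c z w"
    using pseries2_at0_imp_absconv[OF assms] by blast
  have "F 0 0 = eval2 c 0 0" using F[of 0 0] \<rho> by simp
  then show ?thesis by (simp add: eval2_origin)
qed

text \<open>Coefficients of the components of the iterates of the skew product (p z, q z w), where p
  and q have the coefficients Bp and b, computed via f^(n+1) = f \<circ> f^n.\<close>

primrec skew_coeffs :: "(nat \<Rightarrow> nat \<Rightarrow> complex) \<Rightarrow> (nat \<Rightarrow> nat \<Rightarrow> complex) \<Rightarrow> nat \<Rightarrow>
    (nat \<Rightarrow> nat \<Rightarrow> complex) \<times> (nat \<Rightarrow> nat \<Rightarrow> complex)" where
  "skew_coeffs Bp b 0 = (monom2 1 0, monom2 0 1)"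
| "skew_coeffs Bp b (Suc n) =
    (subst2 Bp (fst (skew_coeffs Bp b n)) (snd (skew_coeffs Bp b n)),
     subst2 b (fst (skew_coeffs Bp b n)) (snd (skew_coeffs Bp b n)))"

lemma pseries2_at0_monom2: "pseries2_at0 (\<lambda>z w. z^i * w^j) (monom2 i j)"
  by (rule absconv_imp_pseries2_at0[of 1]) (simp_all add: absconv_monom2 eval2_monom2)

lemma pseries2_at0_skew_coeffs:
  assumes p: "pseries2_at0 (\<lambda>z w. p z) Bp" and q: "pseries2_at0 q b"
    and p0: "p 0 = 0" and q0: "q 0 0 = 0"
  shows "pseries2_at0 (\<lambda>z w. (p ^^ n) z) (fst (skew_coeffs Bp b n)) \<and>
    pseries2_at0 (skewQ p q n) (snd (skew_coeffs Bp b n))"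
proof (induction n)
  case 0
  show ?case using pseries2_at0_monom2[of 1 0] pseries2_at0_monom2[of 0 1] by simp
next
  case (Suc n)
  have pk: "(p ^^ k) 0 = 0" for k by (induction k) (simp_all add: p0)
  have Q0: "skewQ p q n 0 0 = 0" by (induction n) (simp_all add: q0 pk)
  have P0: "(\<lambda>z w. (p ^^ n) z) 0 0 = 0" using pk by simp
  obtain P Q where PQ: "skew_coeffs Bp b n = (P, Q)" by fastforce
  have IH: "pseries2_at0 (\<lambda>z w. (p ^^ n) z) P" "pseries2_at0 (skewQ p q n) Q"
    using Suc by (simp_all add: PQ)
  have "pseries2_at0 (\<lambda>z w. p ((p ^^ n) z)) (subst2 Bp P Q)"
    by (rule pseries2_at0_subst2[OF p IH P0 Q0])
  moreover have "pseries2_at0 (\<lambda>z w. q ((p ^^ n) z) (skewQ p q n z w)) (subst2 b P Q)"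
    by (rule pseries2_at0_subst2[OF q IH P0 Q0])
  ultimately show ?case by (simp add: PQ)
qed

section \<open>Supports in wedges\<close>

definition wedge_supp :: "(nat \<Rightarrow> nat \<Rightarrow> complex) \<Rightarrow> nat \<Rightarrow> nat \<Rightarrow> real \<Rightarrow> bool" where
  "wedge_supp c A B t \<longleftrightarrow> (\<forall>k l. c k l \<noteq> 0 \<longrightarrow> A \<le> k \<and> real A + t * real B \<le> real k + t * real l)"

lemma cauchy_prod2_nonzero:
  assumes "cauchy_prod2 c d k l \<noteq> 0"
  obtains a b where "a \<le> k" "b \<le> l" "c a b \<noteq> 0" "d (k - a) (l - b) \<noteq> 0"
proof -
  have "\<exists>a\<le>k. \<exists>b\<le>l. c a b * d (k - a) (l - b) \<noteq> 0"
    using assms unfolding cauchy_prod2_def by (meson atMost_iff sum.neutral)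
  then show ?thesis using that by (metis mult_zero_left mult_zero_right)
qed

lemma wedge_supp_cauchy_prod2:
  assumes c: "wedge_supp c A1 B1 t" and d: "wedge_supp d A2 B2 t"
  shows "wedge_supp (cauchy_prod2 c d) (A1 + A2) (B1 + B2) t"
  unfolding wedge_supp_def
proof (intro allI impI)
  fix k l assume "cauchy_prod2 c d k l \<noteq> 0"
  then obtain a b where ab: "a \<le> k" "b \<le> l" "c a b \<noteq> 0" "d (k - a) (l - b) \<noteq> 0"
    by (rule cauchy_prod2_nonzero)
  have "A1 \<le> a" "real A1 + t * real B1 \<le> real a + t * real b"
    using c ab unfolding wedge_supp_def by blast+
  moreover have "A2 \<le> k - a" "real A2 + t * real B2 \<le> real (k - a) + t * real (l - b)"
    using d ab unfolding wedge_supp_def by blast+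
  ultimately show "A1 + A2 \<le> k \<and> real (A1 + A2) + t * real (B1 + B2) \<le> real k + t * real l"
    using ab by (auto simp: of_nat_diff algebra_simps)
qed

lemma cauchy_prod2_apex:
  assumes c: "wedge_supp c A1 B1 t" and d: "wedge_supp d A2 B2 t" and t: "t > 0"
  shows "cauchy_prod2 c d (A1 + A2) (B1 + B2) = c A1 B1 * d A2 B2"
proof -
  have other: "(\<lambda>(a,b). c a b * d (A1 + A2 - a) (B1 + B2 - b)) x = 0"
    if "x \<in> {..A1 + A2} \<times> {..B1 + B2} - {(A1, B1)}" for x
  proof (rule ccontr)
    obtain a b where x: "x = (a, b)" by fastforce
    with that have ab: "a \<le> A1 + A2" "b \<le> B1 + B2" "(a, b) \<noteq> (A1, B1)" by auto
    assume "\<not> ?thesis"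
    then have nz: "c a b \<noteq> 0" "d (A1 + A2 - a) (B1 + B2 - b) \<noteq> 0" by (auto simp: x)
    have 1: "A1 \<le> a" "real A1 + t * real B1 \<le> real a + t * real b"
      using c nz unfolding wedge_supp_def by blast+
    have 2: "A2 \<le> A1 + A2 - a" "real A2 + t * real B2 \<le> real (A1 + A2 - a) + t * real (B1 + B2 - b)"
      using d nz unfolding wedge_supp_def by blast+
    have a: "a = A1" using 1(1) 2(1) ab(1) by arith
    then have "t * real B1 \<le> t * real b" "t * real B2 \<le> t * (real B1 + real B2 - real b)"
      using 1(2) 2(2) ab(2) by (simp_all add: of_nat_diff)
    then have "real B1 \<le> real b" "real B2 \<le> real B1 + real B2 - real b"
      using t mult_le_cancel_left_pos by blast+
    then have "b = B1" by linarith
    then show False using a ab(3) by simp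
  qed
  have "cauchy_prod2 c d (A1 + A2) (B1 + B2) =
      (\<Sum>(a,b)\<in>{..A1 + A2} \<times> {..B1 + B2}. c a b * d (A1 + A2 - a) (B1 + B2 - b))"
    unfolding cauchy_prod2_def by (simp add: sum.cartesian_product)
  also have "\<dots> = (\<Sum>(a,b)\<in>{(A1,B1)}. c a b * d (A1 + A2 - a) (B1 + B2 - b))"
    by (rule sum.mono_neutral_right) (simp, simp, blast intro: other)
  finally show ?thesis by simp
qed

lemma wedge_supp_pow2:
  assumes c: "wedge_supp c A B t" and t: "t > 0"
  shows "wedge_supp (pow2 c n) (n * A) (n * B) t \<and> pow2 c n (n * A) (n * B) = c A B ^ n"
proof (induction n)
  case 0
  show ?case by (simp add: wedge_supp_def monom2_def)
next
  case (Suc n)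
  then show ?case
    using wedge_supp_cauchy_prod2[OF c, of "pow2 c n" "n * A" "n * B"]
      cauchy_prod2_apex[OF c _ t, of "pow2 c n" "n * A" "n * B"] by simp
qed

lemma wedge_supp_mon2:
  assumes G: "wedge_supp G A1 B1 t" and H: "wedge_supp H A2 B2 t" and t: "t > 0"
  shows "wedge_supp (mon2 G H i j) (i * A1 + j * A2) (i * B1 + j * B2) t"
    and "mon2 G H i j (i * A1 + j * A2) (i * B1 + j * B2) = G A1 B1 ^ i * H A2 B2 ^ j"
proof -
  have Gi: "wedge_supp (pow2 G i) (i * A1) (i * B1) t" "pow2 G i (i * A1) (i * B1) = G A1 B1 ^ i"
    using wedge_supp_pow2[OF G t] by blast+
  have Hj: "wedge_supp (pow2 H j) (j * A2) (j * B2) t" "pow2 H j (j * A2) (j * B2) = H A2 B2 ^ j"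
    using wedge_supp_pow2[OF H t] by blast+
  show "wedge_supp (mon2 G H i j) (i * A1 + j * A2) (i * B1 + j * B2) t"
    unfolding mon2_def by (rule wedge_supp_cauchy_prod2[OF Gi(1) Hj(1)])
  show "mon2 G H i j (i * A1 + j * A2) (i * B1 + j * B2) = G A1 B1 ^ i * H A2 B2 ^ j"
    unfolding mon2_def using cauchy_prod2_apex[OF Gi(1) Hj(1) t] Gi(2) Hj(2) by simp
qed

lemma subst2_nonzero:
  assumes "subst2 B G H k l \<noteq> 0"
  obtains i j where "B i j \<noteq> 0" "mon2 G H i j k l \<noteq> 0"
proof -
  have "\<exists>i j. B i j \<noteq> 0 \<and> mon2 G H i j k l \<noteq> 0"
  proof (rule ccontr)
    assume "\<not> ?thesis"
    then have "subst2 B G H k l = 0" unfolding subst2_def by (auto intro!: infsum_0)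
    then show False using assms by simp
  qed
  then show ?thesis using that by blast
qed

lemma subst2_eq_single:
  assumes "\<And>i j. (i, j) \<noteq> (i0, j0) \<Longrightarrow> B i j = 0 \<or> mon2 G H i j k l = 0"
  shows "subst2 B G H k l = B i0 j0 * mon2 G H i0 j0 k l"
proof -
  have "(\<lambda>(i,j). B i j * mon2 G H i j k l) ij = 0" if "ij \<noteq> (i0, j0)" for ij
    using assms[of "fst ij" "snd ij"] that by (cases ij) auto
  then show ?thesis
    unfolding subst2_def by (subst infsum_single[of "(i0,j0)"]) auto
qed

text \<open>The linear map (x, y) \<mapsto> (D x + g y, e y) maps the wedge with apex (a, c) into the
  wedge with apex (a D + c g, c e), provided g + t e \<le> t D.\<close>

lemma wedge_linear_image:
  fixes a c i j D g e t :: real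
  assumes "a \<le> i" "a + t * c \<le> i + t * j" "0 \<le> D" "0 \<le> g" "0 \<le> e" "t > 0" "g + t * e \<le> t * D"
  shows "a * D + c * g \<le> i * D + j * g"
    and "a * D + c * g + t * (c * e) \<le> i * D + j * g + t * (j * e)"
proof -
  have "a * D + c * g \<le> i * D + j * g \<and> a * D + c * g + t * (c * e) \<le> i * D + j * g + t * (j * e)"
  proof (cases "c \<le> j")
    case True
    have "a * D \<le> i * D" "c * g \<le> j * g" "t * (c * e) \<le> t * (j * e)"
      using assms True by (auto intro!: mult_left_mono mult_right_mono)
    then show ?thesis by linarith
  next
    case False
    have "t * (c - j) * D \<le> (i - a) * D"
      using assms by (intro mult_right_mono) (auto simp: algebra_simps)
    moreover have "(c - j) * (g + t * e) \<le> (c - j) * (t * D)"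
      using assms False by (intro mult_left_mono) auto
    moreover have "(c - j) * g \<le> (c - j) * (g + t * e)"
      using assms False by (intro mult_left_mono) auto
    ultimately show ?thesis by (simp add: algebra_simps)
  qed
  then show "a * D + c * g \<le> i * D + j * g"
    and "a * D + c * g + t * (c * e) \<le> i * D + j * g + t * (j * e)" by auto
qed

lemma mon2_nonzero_bounds:
  assumes G: "wedge_supp G D 0 t" and H: "wedge_supp H g e t" and t: "t > 0"
    and nz: "mon2 G H i j k l \<noteq> 0"
  shows "real i * real D + real j * real g \<le> real k"
    and "real i * real D + real j * real g + t * (real j * real e) \<le> real k + t * real l"
  using wedge_supp_mon2(1)[OF G H t, of i j] nz unfolding wedge_supp_def
  by (auto simp flip: of_nat_mult of_nat_add)

lemma wedge_supp_subst2:
  assumes B: "wedge_supp B a c t" and G: "wedge_supp G D 0 t" and H: "wedge_supp H g e t"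
    and t: "t > 0" and gD: "real g + t * real e \<le> t * real D"
  shows "wedge_supp (subst2 B G H) (a * D + c * g) (c * e) t"
  unfolding wedge_supp_def
proof (intro allI impI)
  fix k l assume "subst2 B G H k l \<noteq> 0"
  then obtain i j where ij: "B i j \<noteq> 0" "mon2 G H i j k l \<noteq> 0" by (rule subst2_nonzero)
  have "a \<le> i" "real a + t * real c \<le> real i + t * real j"
    using B ij(1) unfolding wedge_supp_def by auto
  then have "real a * real D + real c * real g \<le> real i * real D + real j * real g"
    and "real a * real D + real c * real g + t * (real c * real e) \<le>
      real i * real D + real j * real g + t * (real j * real e)"
    using wedge_linear_image[of "real a" "real i" t "real c" "real j" "real D" "real g" "real e"] t gD
    by auto
  with mon2_nonzero_bounds[OF G H t ij(2)]
  have "real (a * D + c * g) \<le> real k" "real (a * D + c * g) + t * real (c * e) \<le> real k + t * real l"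
    by auto
  then show "a * D + c * g \<le> k \<and> real (a * D + c * g) + t * real (c * e) \<le> real k + t * real l"
    by (simp only: of_nat_le_iff)
qed

lemma subst2_apex:
  assumes B: "wedge_supp B a c t" and G: "wedge_supp G D 0 t" and H: "wedge_supp H g e t"
    and t: "t > 0" and gD: "real g + t * real e \<le> t * real D" and D: "D \<ge> 1" and e: "e \<ge> 1"
  shows "subst2 B G H (a * D + c * g) (c * e) = B a c * G D 0 ^ a * H g e ^ c"
proof -
  have "subst2 B G H (a * D + c * g) (c * e) = B a c * mon2 G H a c (a * D + c * g) (c * e)"
  proof (rule subst2_eq_single)
    fix i j assume ne: "(i, j) \<noteq> (a, c)"
    show "B i j = 0 \<or> mon2 G H i j (a * D + c * g) (c * e) = 0"
    proof (rule ccontr)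
      assume "\<not> ?thesis"
      then have ij: "B i j \<noteq> 0" "mon2 G H i j (a * D + c * g) (c * e) \<noteq> 0" by auto
      have "a \<le> i" "real a + t * real c \<le> real i + t * real j"
        using B ij(1) unfolding wedge_supp_def by auto
      then have "real a * real D + real c * real g \<le> real i * real D + real j * real g"
        and "real a * real D + real c * real g + t * (real c * real e) \<le>
          real i * real D + real j * real g + t * (real j * real e)"
        using wedge_linear_image[of "real a" "real i" t "real c" "real j" "real D" "real g" "real e"] t gD
        by auto
      moreover note mon2_nonzero_bounds[OF G H t ij(2)]
      ultimately have "t * (real j * real e) = t * (real c * real e)"
        and ij_eq: "real i * real D + real j * real g = real a * real D + real c * real g"
        by auto
      then have "j = c" using t e by simp
      then have "i = a" using ij_eq D by simp
      with \<open>j = c\<close> ne show False by simp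
    qed
  qed
  also have "mon2 G H a c (a * D + c * g) (c * e) = G D 0 ^ a * H g e ^ c"
    using wedge_supp_mon2(2)[OF G H t, of a c] by simp
  finally show ?thesis by simp
qed

text \<open>The gamma_n of the theorem, with d = m1.\<close>

primrec gamma_iter :: "nat \<Rightarrow> nat \<Rightarrow> nat \<Rightarrow> nat \<Rightarrow> nat" where
  "gamma_iter n1 d \<delta> 0 = 0"
| "gamma_iter n1 d \<delta> (Suc n) = n1 * \<delta> ^ n + d * gamma_iter n1 d \<delta> n"

lemma gamma_iter_eq_sum: "gamma_iter n1 d \<delta> n = n1 * (\<Sum>k<n. \<delta> ^ (n - 1 - k) * d ^ k)"
proof (induction n)
  case 0
  then show ?case by simp
next
  case (Suc n)
  have "(\<Sum>k<Suc n. \<delta> ^ (Suc n - 1 - k) * d ^ k) = \<delta> ^ n + (\<Sum>k<n. \<delta> ^ (n - Suc k) * d ^ Suc k)"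
    by (subst sum.lessThan_Suc_shift) simp
  also have "(\<Sum>k<n. \<delta> ^ (n - Suc k) * d ^ Suc k) = d * (\<Sum>k<n. \<delta> ^ (n - 1 - k) * d ^ k)"
    by (simp add: sum_distrib_left mult_ac)
  finally show ?case using Suc by (simp add: algebra_simps)
qed

lemma gamma_iter_bound:
  assumes t: "t > 0" and case3: "real n1 \<le> t * (real \<delta> - real d)"
  shows "real (gamma_iter n1 d \<delta> n) + t * real (d ^ n) \<le> t * real (\<delta> ^ n)"
proof (induction n)
  case 0
  then show ?case by simp
next
  case (Suc n)
  have "real n1 * real (\<delta> ^ n) \<le> t * (real \<delta> - real d) * real (\<delta> ^ n)"
    using case3 by (rule mult_right_mono) simp
  moreover have "real d * (real (gamma_iter n1 d \<delta> n) + t * real (d ^ n)) \<le> real d * (t * real (\<delta> ^ n))"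
    using Suc by (rule mult_left_mono) simp
  ultimately show ?case by (simp add: algebra_simps)
qed

lemma wedge_supp_skew_coeffs:
  assumes Bp: "wedge_supp Bp \<delta> 0 t" "Bp \<delta> 0 \<noteq> 0" and b: "wedge_supp b n1 m1 t" "b n1 m1 \<noteq> 0"
    and t: "t > 0" and \<delta>: "\<delta> \<ge> 1" and m1: "m1 \<ge> 1" and case3: "real n1 \<le> t * (real \<delta> - real m1)"
  shows "wedge_supp (fst (skew_coeffs Bp b n)) (\<delta> ^ n) 0 t \<and> fst (skew_coeffs Bp b n) (\<delta> ^ n) 0 \<noteq> 0 \<and>
    wedge_supp (snd (skew_coeffs Bp b n)) (gamma_iter n1 m1 \<delta> n) (m1 ^ n) t \<and>
    snd (skew_coeffs Bp b n) (gamma_iter n1 m1 \<delta> n) (m1 ^ n) \<noteq> 0"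
proof (induction n)
  case 0
  show ?case by (auto simp: wedge_supp_def monom2_def)
next
  case (Suc n)
  obtain P Q where PQ: "skew_coeffs Bp b n = (P, Q)" by fastforce
  define D g e where "D = \<delta> ^ n" and "g = gamma_iter n1 m1 \<delta> n" and "e = m1 ^ n"
  have P: "wedge_supp P D 0 t" "P D 0 \<noteq> 0" and Q: "wedge_supp Q g e t" "Q g e \<noteq> 0"
    using Suc by (simp_all add: PQ D_def g_def e_def)
  have gD: "real g + t * real e \<le> t * real D"
    unfolding D_def g_def e_def by (rule gamma_iter_bound[OF t case3])
  have D: "D \<ge> 1" and e: "e \<ge> 1" using \<delta> m1 by (simp_all add: D_def e_def)
  have eqs: "\<delta> ^ Suc n = \<delta> * D + 0 * g" "gamma_iter n1 m1 \<delta> (Suc n) = n1 * D + m1 * g"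
    "m1 ^ Suc n = m1 * e"
    by (simp_all add: D_def g_def e_def)
  show ?case
    unfolding skew_coeffs.simps PQ prod.sel eqs
    using wedge_supp_subst2[OF Bp(1) P(1) Q(1) t gD] subst2_apex[OF Bp(1) P(1) Q(1) t gD D e]
      wedge_supp_subst2[OF b(1) P(1) Q(1) t gD] subst2_apex[OF b(1) P(1) Q(1) t gD D e]
      Bp(2) b(2) P(2) Q(2)
    by simp
qed

section \<open>Newton polygons\<close>

lemma newton_polygon_alt:
  "newton_polygon c = convex hull {v. \<exists>i j. c i j \<noteq> 0 \<and> real i \<le> fst v \<and> real j \<le> snd v}"
  unfolding newton_polygon_def by (rule arg_cong[where f="\<lambda>S. convex hull S"]) auto

lemma support_in_newton_polygon: "c i j \<noteq> 0 \<Longrightarrow> (real i, real j) \<in> newton_polygon c"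
  unfolding newton_polygon_alt by (rule hull_inc) auto

lemma newton_polygon_subset_halfplane:
  assumes "a \<ge> 0" "b \<ge> 0" and supp: "\<And>i j. c i j \<noteq> 0 \<Longrightarrow> K \<le> a * real i + b * real j"
  shows "newton_polygon c \<subseteq> {v. K \<le> a * fst v + b * snd v}"
  unfolding newton_polygon_alt
proof (rule hull_minimal)
  show "convex {v. K \<le> a * fst v + b * snd v}"
    using convex_halfspace_ge[where a="(a, b)" and b=K] by (simp add: inner_prod_def)
  show "{v. \<exists>i j. c i j \<noteq> 0 \<and> real i \<le> fst v \<and> real j \<le> snd v} \<subseteq> {v. K \<le> a * fst v + b * snd v}"
  proof safe
    fix v i j assume ij: "c i j \<noteq> 0" "real i \<le> fst v" "real j \<le> snd v"
    have "a * real i + b * real j \<le> a * fst v + b * snd v"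
      using ij assms by (intro add_mono mult_left_mono) auto
    then show "K \<le> a * fst v + b * snd v" using supp[OF ij(1)] by simp
  qed
qed

lemma newton_polygon_add_nonneg:
  assumes v: "v \<in> newton_polygon c" and d: "fst d \<ge> 0" "snd d \<ge> 0"
  shows "v + d \<in> newton_polygon c"
proof -
  let ?U = "{v. \<exists>i j. c i j \<noteq> 0 \<and> real i \<le> fst v \<and> real j \<le> snd v}"
  have "v + d \<in> (\<lambda>x. d + x) ` (convex hull ?U)" using v by (simp add: newton_polygon_alt add.commute)
  also have "\<dots> = convex hull ((\<lambda>x. d + x) ` ?U)" by (rule convex_hull_translation[symmetric])
  also have "\<dots> \<subseteq> convex hull ?U"
    by (rule hull_mono) (use d in \<open>fastforce intro: order_trans\<close>)
  finally show ?thesis by (simp add: newton_polygon_alt)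
qed

lemma not_extreme_point_add_nonneg:
  assumes v: "v \<in> newton_polygon c" and d: "fst d \<ge> 0" "snd d \<ge> 0" "d \<noteq> 0"
  shows "\<not> (v + d) extreme_point_of newton_polygon c"
proof
  assume extreme: "(v + d) extreme_point_of newton_polygon c"
  have "v + 2 *\<^sub>R d \<in> newton_polygon c" using newton_polygon_add_nonneg[OF v, of "2 *\<^sub>R d"] d by auto
  moreover have "v + d \<in> open_segment v (v + 2 *\<^sub>R d)"
    unfolding in_segment using d(3)
    by (intro conjI exI[of _ "1/2"]) (auto simp: algebra_simps prod_eq_iff)
  ultimately show False using extreme v unfolding extreme_point_of_def by blast
qed

lemma newton_vertex_in_support:
  assumes "v \<in> newton_vertices c"
  obtains i j where "c i j \<noteq> 0" "v = (real i, real j)"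
proof -
  have extreme: "v extreme_point_of newton_polygon c" using assms by (simp add: newton_vertices_def)
  have "v \<in> {v. \<exists>i j. c i j \<noteq> 0 \<and> real i \<le> fst v \<and> real j \<le> snd v}"
    by (rule extreme_point_of_convex_hull) (use extreme in \<open>simp add: newton_polygon_alt\<close>)
  then obtain i j where ij: "c i j \<noteq> 0" "real i \<le> fst v" "real j \<le> snd v" by blast
  define d where "d = v - (real i, real j)"
  have "d = 0"
  proof (rule ccontr)
    assume "d \<noteq> 0"
    moreover have "fst d \<ge> 0" "snd d \<ge> 0" using ij by (auto simp: d_def)
    ultimately have "\<not> ((real i, real j) + d) extreme_point_of newton_polygon c"
      using not_extreme_point_add_nonneg[OF support_in_newton_polygon[of c i j, OF ij(1)]] by blast
    moreover have "(real i, real j) + d = v" by (simp add: d_def)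
    ultimately show False using extreme by simp
  qed
  then show ?thesis using that ij(1) by (simp add: d_def)
qed

lemma extreme_point_of_two_halfplanes:
  fixes P :: "(real \<times> real) set"
  assumes P1: "P \<subseteq> {v. K1 \<le> a1 * fst v + b1 * snd v}" and P2: "P \<subseteq> {v. K2 \<le> a2 * fst v + b2 * snd v}"
    and x: "x \<in> P" and x1: "a1 * fst x + b1 * snd x = K1" and x2: "a2 * fst x + b2 * snd x = K2"
    and det: "a1 * b2 - a2 * b1 \<noteq> 0"
  shows "x extreme_point_of P"
  unfolding extreme_point_of_def
proof (intro conjI x ballI notI)
  fix p q assume p: "p \<in> P" and q: "q \<in> P" and "x \<in> open_segment p q"
  then obtain u where u: "0 < u" "u < 1" and pq: "p \<noteq> q" and xe: "x = (1 - u) *\<^sub>R p + u *\<^sub>R q"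
    unfolding in_segment by blast
  have on_line: "a * fst p + b * snd p = K \<and> a * fst q + b * snd q = K"
    if P: "P \<subseteq> {v. K \<le> a * fst v + b * snd v}" and x: "a * fst x + b * snd x = K" for a b K
  proof -
    define Lp Lq where "Lp = a * fst p + b * snd p" and "Lq = a * fst q + b * snd q"
    have "0 \<le> (1 - u) * (Lp - K)" "0 \<le> u * (Lq - K)"
      using P p q u by (auto simp: Lp_def Lq_def)
    moreover have "(1 - u) * (Lp - K) + u * (Lq - K) = 0"
      using x unfolding xe Lp_def Lq_def by (simp add: algebra_simps)
    ultimately have "(1 - u) * (Lp - K) = 0" "u * (Lq - K) = 0" by linarith+
    then show ?thesis using u by (simp add: Lp_def Lq_def)
  qed
  define d1 d2 where "d1 = fst p - fst q" and "d2 = snd p - snd q"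
  have l1: "a1 * d1 + b1 * d2 = 0" and l2: "a2 * d1 + b2 * d2 = 0"
    using on_line[OF P1 x1] on_line[OF P2 x2] by (auto simp: d1_def d2_def algebra_simps)
  have "(a1 * b2 - a2 * b1) * d1 = b2 * (a1 * d1 + b1 * d2) - b1 * (a2 * d1 + b2 * d2)"
    and "(a1 * b2 - a2 * b1) * d2 = a1 * (a2 * d1 + b2 * d2) - a2 * (a1 * d1 + b1 * d2)"
    by (simp_all add: algebra_simps)
  then have "(a1 * b2 - a2 * b1) * d1 = 0" "(a1 * b2 - a2 * b1) * d2 = 0"
    by (simp_all only: l1 l2 mult_zero_right diff_self)
  then have "d1 = 0" "d2 = 0" using det by simp_all
  then show False using pq by (simp add: d1_def d2_def prod_eq_iff)
qed

lemma newton_polygon_wedge: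
  assumes c: "wedge_supp c A B t" and apex: "c A B \<noteq> 0" and t: "t > 0"
  shows "z_order_is c A"
    and "(real A, real B) \<in> newton_vertices c"
    and "\<forall>v\<in>newton_vertices c. real A \<le> fst v"
    and "newton_polygon c \<subseteq> {(x,y). x \<ge> real A \<and> x + t * y \<ge> real A + t * real B}"
proof -
  have H1: "newton_polygon c \<subseteq> {v. real A \<le> 1 * fst v + 0 * snd v}"
    by (rule newton_polygon_subset_halfplane) (use c in \<open>auto simp: wedge_supp_def\<close>)
  have H2: "newton_polygon c \<subseteq> {v. real A + t * real B \<le> 1 * fst v + t * snd v}"
    by (rule newton_polygon_subset_halfplane) (use c t in \<open>auto simp: wedge_supp_def\<close>)
  show "z_order_is c A"
    using c apex unfolding z_order_is_def wedge_supp_def by (meson not_le)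
  show "(real A, real B) \<in> newton_vertices c"
    unfolding newton_vertices_def
    by (rule CollectI, rule extreme_point_of_two_halfplanes[OF H1 H2 support_in_newton_polygon[of c, OF apex]])
      (use t in auto)
  show "\<forall>v\<in>newton_vertices c. real A \<le> fst v"
    using H1 by (auto simp: newton_vertices_def extreme_point_of_def)
  show "newton_polygon c \<subseteq> {(x,y). x \<ge> real A \<and> x + t * y \<ge> real A + t * real B}"
    using H1 H2 by auto
qed

lemma newton_vertex_minimizing:
  fixes A B :: nat
  assumes nz: "c i j \<noteq> 0" and A: "A > 0"
  obtains i0 j0 where "(real i0, real j0) \<in> newton_vertices c" "c i0 j0 \<noteq> 0"
    "\<And>i j. c i j \<noteq> 0 \<Longrightarrow> A * i0 + B * j0 \<le> A * i + B * j"
proof -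
  define M where "M = (LEAST m. \<exists>i j. c i j \<noteq> 0 \<and> A * i + B * j = m)"
  have "\<exists>i j. c i j \<noteq> 0 \<and> A * i + B * j = M"
    unfolding M_def by (rule LeastI_ex) (use nz in blast)
  have M_le: "M \<le> A * i + B * j" if "c i j \<noteq> 0" for i j
    unfolding M_def using that by (blast intro: Least_le)
  text \<open>Breaking ties by least j provides a second supporting line through the minimiser.\<close>
  define j0 where "j0 = (LEAST j. \<exists>i. c i j \<noteq> 0 \<and> A * i + B * j = M)"
  have "\<exists>i. c i j0 \<noteq> 0 \<and> A * i + B * j0 = M"
    unfolding j0_def by (rule LeastI_ex) (use \<open>\<exists>i j. c i j \<noteq> 0 \<and> A * i + B * j = M\<close> in blast)
  then obtain i0 where i0: "c i0 j0 \<noteq> 0" "A * i0 + B * j0 = M" by blast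
  have j0_le: "j0 \<le> j" if "c i j \<noteq> 0" "A * i + B * j = M" for i j
    unfolding j0_def using that by (blast intro: Least_le)
  define K where "K = real j0"
  have H1: "newton_polygon c \<subseteq> {v. real M \<le> real A * fst v + real B * snd v}"
    by (rule newton_polygon_subset_halfplane) (auto dest!: M_le simp flip: of_nat_mult of_nat_add)
  have H2: "newton_polygon c \<subseteq> {v. K * real M + real j0 \<le> (K * real A) * fst v + (1 + K * real B) * snd v}"
  proof (rule newton_polygon_subset_halfplane)
    fix i j assume ij: "c i j \<noteq> 0"
    have eq: "(K * real A) * real i + (1 + K * real B) * real j = real j + K * real (A * i + B * j)"
      by (simp add: algebra_simps)
    show "K * real M + real j0 \<le> (K * real A) * real i + (1 + K * real B) * real j"
    proof (cases "A * i + B * j = M")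
      case True
      then show ?thesis using j0_le[OF ij True] eq by simp
    next
      case False
      then have "M + 1 \<le> A * i + B * j" using M_le[OF ij] by simp
      then have "real (M + 1) \<le> real (A * i + B * j)" by (simp only: of_nat_le_iff)
      then have "K * real (M + 1) \<le> K * real (A * i + B * j)"
        by (rule mult_left_mono) (simp add: K_def)
      then show ?thesis using eq by (simp add: K_def algebra_simps)
    qed
  qed (auto simp: K_def)
  have "(real i0, real j0) extreme_point_of newton_polygon c"
  proof (rule extreme_point_of_two_halfplanes[OF H1 H2 support_in_newton_polygon[of c, OF i0(1)]])
    show M: "real A * fst (real i0, real j0) + real B * snd (real i0, real j0) = real M"
      using i0(2) by (simp flip: of_nat_mult of_nat_add)
    have "K * real A * real i0 + (1 + K * real B) * real j0 = K * (real A * real i0 + real B * real j0) + real j0"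
      by (simp add: algebra_simps)
    then show "K * real A * fst (real i0, real j0) + (1 + K * real B) * snd (real i0, real j0) = K * real M + real j0"
      using M by simp
    show "real A * (1 + K * real B) - K * real A * real B \<noteq> 0"
      using A by (simp add: algebra_simps)
  qed
  then have "(real i0, real j0) \<in> newton_vertices c" by (simp add: newton_vertices_def)
  moreover have "A * i0 + B * j0 \<le> A * i + B * j" if "c i j \<noteq> 0" for i j
    using M_le[OF that] i0(2) by simp
  ultimately show ?thesis using that i0(1) by blast
qed

lemma newton_leftmost_vertex:
  assumes left: "\<forall>v\<in>newton_vertices c. real n1 \<le> fst v" and nz: "c i j \<noteq> 0"
  shows "n1 \<le> i"
proof -
  obtain i0 j0 where v: "(real i0, real j0) \<in> newton_vertices c" and "c i0 j0 \<noteq> 0"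
    and min: "\<And>i j. c i j \<noteq> 0 \<Longrightarrow> 1 * i0 + 0 * j0 \<le> 1 * i + 0 * j"
    by (rule newton_vertex_minimizing[where c=c and i=i and j=j and A=1 and B=0, OF nz]) auto
  have "real n1 \<le> real i0" using left v by fastforce
  then show ?thesis using min[OF nz] by simp
qed

lemma newton_vertex_lowest_in_column:
  assumes v: "(real n, real m) \<in> newton_vertices c" and nz: "c n j \<noteq> 0"
  shows "m \<le> j"
proof (rule ccontr)
  assume "\<not> m \<le> j"
  then have "\<not> ((real n, real j) + (0, real m - real j)) extreme_point_of newton_polygon c"
    by (intro not_extreme_point_add_nonneg[OF support_in_newton_polygon[of c, OF nz]])
      (auto simp: zero_prod_def)
  then show False using v by (simp add: newton_vertices_def)
qed

lemma newton_vertices_decreasing: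
  assumes v1: "(real n1, real m1) \<in> newton_vertices c" and v2: "(real n2, real m2) \<in> newton_vertices c"
    and n12: "n1 < n2"
  shows "m2 < m1"
proof (rule ccontr)
  assume "\<not> m2 < m1"
  have "(real n1, real m1) \<in> newton_polygon c"
    using v1 by (simp add: newton_vertices_def extreme_point_of_def)
  then have "\<not> ((real n1, real m1) + (real n2 - real n1, real m2 - real m1)) extreme_point_of newton_polygon c"
    using \<open>\<not> m2 < m1\<close> n12 by (intro not_extreme_point_add_nonneg) (auto simp: zero_prod_def)
  then show False using v2 by (simp add: newton_vertices_def)
qed

lemma convex_newton_polygon: "convex (newton_polygon c)"
  unfolding newton_polygon_def by (rule convex_convex_hull)

lemma newton_vertex_below_segment:
  assumes p: "p \<in> newton_polygon c" and q: "q \<in> newton_polygon c" and s: "0 \<le> s" "s \<le> 1"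
    and v: "v \<in> newton_vertices c" and x: "fst v = fst ((1 - s) *\<^sub>R p + s *\<^sub>R q)"
  shows "snd v \<le> snd ((1 - s) *\<^sub>R p + s *\<^sub>R q)"
proof (rule ccontr)
  define u where "u = (1 - s) *\<^sub>R p + s *\<^sub>R q"
  have u: "u \<in> newton_polygon c"
    unfolding u_def by (rule convexD[OF convex_newton_polygon p q]) (use s in auto)
  assume "\<not> ?thesis"
  then have "\<not> (u + (0, snd v - snd u)) extreme_point_of newton_polygon c"
    by (intro not_extreme_point_add_nonneg[OF u]) (auto simp: u_def zero_prod_def)
  moreover have "u + (0, snd v - snd u) = v" using x by (simp add: u_def prod_eq_iff)
  ultimately show False using v by (simp add: newton_vertices_def)
qed

lemma newton_first_edge_bound:
  assumes v1: "(real n1, real m1) \<in> newton_vertices c"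
    and left: "\<forall>v\<in>newton_vertices c. real n1 \<le> fst v"
    and v2: "(real n2, real m2) \<in> newton_vertices c" and n12: "n1 < n2"
    and adjacent: "\<forall>v\<in>newton_vertices c. fst v \<le> real n1 \<or> real n2 \<le> fst v"
    and nz: "c i j \<noteq> 0"
  shows "(m1 - m2) * n1 + (n2 - n1) * m1 \<le> (m1 - m2) * i + (n2 - n1) * j"
proof (rule ccontr)
  assume contra: "\<not> ?thesis"
  have m12: "m2 < m1" by (rule newton_vertices_decreasing[OF v1 v2 n12])
  define A B where "A = m1 - m2" and "B = n2 - n1"
  obtain i0 j0 where v0: "(real i0, real j0) \<in> newton_vertices c" and nz0: "c i0 j0 \<noteq> 0"
    and min: "\<And>i j. c i j \<noteq> 0 \<Longrightarrow> A * i0 + B * j0 \<le> A * i + B * j"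
    by (rule newton_vertex_minimizing[where c=c and i=i and j=j and A=A and B=B, OF nz])
      (use m12 in \<open>auto simp: A_def\<close>)
  have "A * i0 + B * j0 < A * n1 + B * m1"
    using min[OF nz] contra by (simp add: A_def B_def)
  then have below: "real A * real i0 + real B * real j0 < real A * real n1 + real B * real m1"
    by (simp flip: of_nat_mult of_nat_add)
  have AB: "real A = real m1 - real m2" "real B = real n2 - real n1"
    using m12 n12 by (simp_all add: A_def B_def of_nat_diff)
  have "n1 \<le> i0" by (rule newton_leftmost_vertex[OF left nz0])
  moreover have "real i0 \<le> real n1 \<or> real n2 \<le> real i0" using adjacent v0 by fastforce
  ultimately consider "i0 = n1" | "n2 \<le> i0" by linarith
  then show False
  proof cases
    case 1
    then have "real B * real j0 < real B * real m1" using below by simp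
    moreover have "real B > 0" using AB n12 by simp
    ultimately have "j0 < m1" by (simp add: mult_less_cancel_left_pos)
    moreover have "m1 \<le> j0" using newton_vertex_lowest_in_column[OF v1] nz0 1 by simp
    ultimately show False by simp
  next
    case 2
    text \<open>The point of the segment from (n1, m1) to (i0, j0) above n2 lies strictly below (n2, m2).\<close>
    define s where "s = real B / (real i0 - real n1)"
    have s: "0 < s" "s \<le> 1" using AB 2 n12 by (auto simp: s_def field_simps)
    define u where "u = (1 - s) *\<^sub>R (real n1, real m1) + s *\<^sub>R (real i0, real j0)"
    have "fst u = real n1 + s * (real i0 - real n1)" by (simp add: u_def algebra_simps)
    then have fst_u: "fst u = real n2" using 2 n12 AB by (simp add: s_def)
    have "real A * fst u + real B * snd u =
        (1 - s) * (real A * real n1 + real B * real m1) + s * (real A * real i0 + real B * real j0)"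
      by (simp add: u_def algebra_simps)
    also have "\<dots> < real A * real n1 + real B * real m1"
      using mult_strict_left_mono[OF below s(1)] by (simp add: algebra_simps)
    also have "\<dots> = real A * real n2 + real B * real m2"
      by (simp add: AB algebra_simps)
    finally have "snd u < real m2" using fst_u AB n12 by simp
    moreover have "real m2 \<le> snd u"
    proof -
      have "(real n1, real m1) \<in> newton_polygon c" "(real i0, real j0) \<in> newton_polygon c"
        using v1 v0 by (simp_all add: newton_vertices_def extreme_point_of_def)
      from newton_vertex_below_segment[OF this _ s(2) v2] show ?thesis
        using s fst_u by (simp add: u_def)
    qed
    ultimately show False by simp
  qed
qed

lemma newton_first_edge_wedge:
  assumes v1: "(real n1, real m1) \<in> newton_vertices c"
    and left: "\<forall>v\<in>newton_vertices c. real n1 \<le> fst v"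
    and v2: "(real n2, real m2) \<in> newton_vertices c" and n12: "n1 < n2"
    and adjacent: "\<forall>v\<in>newton_vertices c. fst v \<le> real n1 \<or> real n2 \<le> fst v"
  shows "c n1 m1 \<noteq> 0" and "m2 < m1"
    and "wedge_supp c n1 m1 ((real n2 - real n1) / (real m1 - real m2))"
proof -
  show "c n1 m1 \<noteq> 0"
    using v1 by (rule newton_vertex_in_support) simp
  show m12: "m2 < m1" by (rule newton_vertices_decreasing[OF v1 v2 n12])
  define a b where "a = real m1 - real m2" and "b = real n2 - real n1"
  have a: "a > 0" using m12 by (simp add: a_def)
  have "real n1 + b / a * real m1 \<le> real i + b / a * real j" if "c i j \<noteq> 0" for i j
  proof -
    have "(m1 - m2) * n1 + (n2 - n1) * m1 \<le> (m1 - m2) * i + (n2 - n1) * j"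
      by (rule newton_first_edge_bound[OF v1 left v2 n12 adjacent that])
    then have "a * real n1 + b * real m1 \<le> a * real i + b * real j"
      using m12 n12 unfolding a_def b_def by (simp flip: of_nat_mult of_nat_add of_nat_diff)
    then have "a * (real n1 + b / a * real m1) \<le> a * (real i + b / a * real j)"
      using a by (simp add: algebra_simps)
    then show ?thesis using a by (simp add: mult_le_cancel_left_pos)
  qed
  then show "wedge_supp c n1 m1 ((real n2 - real n1) / (real m1 - real m2))"
    using newton_leftmost_vertex[OF left] by (auto simp: wedge_supp_def a_def b_def)
qed

theorem proposition5:
  fixes p :: "complex \<Rightarrow> complex" and q :: "complex \<Rightarrow> complex \<Rightarrow> complex"
    and b :: "nat \<Rightarrow> nat \<Rightarrow> complex" and \<delta> :: nat
    and n1 m1 n2 m2 :: nat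
  assumes p_holo: "\<exists>r>0. p holomorphic_on ball 0 r"
    and delta_ge: "\<delta> \<ge> 1"
    and p_order: "\<forall>k<\<delta>. (deriv ^^ k) p 0 = 0" "(deriv ^^ \<delta>) p 0 \<noteq> 0"
    and q_series: "pseries2_at0 q b"
    and q_zero: "b 0 0 = 0"
    and q_nonzero: "\<exists>i j. b i j \<noteq> 0"
    and v1: "(real n1, real m1) \<in> newton_vertices b"
    and v1_min: "\<forall>v\<in>newton_vertices b. real n1 \<le> fst v"
    and v2: "(real n2, real m2) \<in> newton_vertices b"
    and n12: "n1 < n2"
    and v2_next: "\<forall>v\<in>newton_vertices b. fst v \<le> real n1 \<or> real n2 \<le> fst v"
    and case3: "real m1 + real n1 * (real m1 - real m2) / (real n2 - real n1) \<le> real \<delta>"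
  shows "\<forall>n\<ge>1.
     let \<gamma>n = n1 * (\<Sum>k<n. \<delta> ^ (n - 1 - k) * m1 ^ k);
         l2 = (real n2 - real n1) / (real m1 - real m2)
     in (\<exists>c. pseries2_at0 (skewQ p q n) c) \<and>
        (\<forall>c. pseries2_at0 (skewQ p q n) c \<longrightarrow>
           z_order_is c \<gamma>n \<and>
           (real \<gamma>n, real (m1 ^ n)) \<in> newton_vertices c \<and>
           (\<forall>v\<in>newton_vertices c. real \<gamma>n \<le> fst v) \<and>
           newton_polygon c \<subseteq> {(x,y). x \<ge> real \<gamma>n \<and>
                                     x + l2 * y \<ge> real \<gamma>n + l2 * real (m1 ^ n)})"
proof (intro allI impI)
  fix n :: nat
  obtain r where r: "r > 0" and p_hol: "p holomorphic_on ball 0 r" using p_holo by blast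
  define Bp where "Bp = (\<lambda>i j::nat. if j = 0 then (deriv ^^ i) p 0 / fact i else 0)"
  define l2 where "l2 = (real n2 - real n1) / (real m1 - real m2)"
  have p_series: "pseries2_at0 (\<lambda>z w. p z) Bp"
    unfolding Bp_def by (rule pseries2_at0_holomorphic[OF r p_hol])
  have Bp: "wedge_supp Bp \<delta> 0 l2" "Bp \<delta> 0 \<noteq> 0"
    using p_order by (auto simp: Bp_def wedge_supp_def split: if_splits) (meson not_le)
  have b: "b n1 m1 \<noteq> 0" "m2 < m1" "wedge_supp b n1 m1 l2"
    using newton_first_edge_wedge[OF v1 v1_min v2 n12 v2_next] by (simp_all add: l2_def)
  have l2: "l2 > 0" using b(2) n12 by (simp add: l2_def)
  have "real n1 / l2 \<le> real \<delta> - real m1" using case3 by (simp add: l2_def)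
  then have bound: "real n1 \<le> l2 * (real \<delta> - real m1)" using l2 by (simp add: field_simps)
  have "p 0 = 0" using p_order(1) delta_ge by auto
  moreover have "q 0 0 = 0" using pseries2_at0_origin[OF q_series] q_zero by simp
  ultimately have Q_series: "pseries2_at0 (skewQ p q n) (snd (skew_coeffs Bp b n))"
    using pseries2_at0_skew_coeffs[OF p_series q_series] by blast
  have "wedge_supp (snd (skew_coeffs Bp b n)) (gamma_iter n1 m1 \<delta> n) (m1 ^ n) l2"
    "snd (skew_coeffs Bp b n) (gamma_iter n1 m1 \<delta> n) (m1 ^ n) \<noteq> 0"
    using wedge_supp_skew_coeffs[OF Bp b(3,1) l2 delta_ge _ bound] b(2) by auto
  note newton = newton_polygon_wedge[OF this l2]
  show "let \<gamma>n = n1 * (\<Sum>k<n. \<delta> ^ (n - 1 - k) * m1 ^ k);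
         l2 = (real n2 - real n1) / (real m1 - real m2)
     in (\<exists>c. pseries2_at0 (skewQ p q n) c) \<and>
        (\<forall>c. pseries2_at0 (skewQ p q n) c \<longrightarrow>
           z_order_is c \<gamma>n \<and>
           (real \<gamma>n, real (m1 ^ n)) \<in> newton_vertices c \<and>
           (\<forall>v\<in>newton_vertices c. real \<gamma>n \<le> fst v) \<and>
           newton_polygon c \<subseteq> {(x,y). x \<ge> real \<gamma>n \<and>
                                     x + l2 * y \<ge> real \<gamma>n + l2 * real (m1 ^ n)})"
    unfolding Let_def gamma_iter_eq_sum[symmetric] l2_def[symmetric]
    using Q_series newton pseries2_at0_unique[OF _ Q_series] by blast
qed

end
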